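(* Let $H$, $A$, $Z$ be as in the context, and assume $Z_{ijkl}(x)=0$ for all $x\in\partial\mathbb{R}^n_+$ and all $i,j,k,l\in\{1,\dots,n\}$. Then $H_{ik}(x)=A_{ik}(x)=0$ for all $x\in\partial\mathbb{R}^n_+$ and all $i,k\in\{1,\dots,n-1\}$.
   Context: Let $n\ge6$, $d=\lfloor\frac{n-2}{2}\rfloor$, $\mathbb{R}^n_+=\{x\in\mathbb{R}^n:x_n\ge0\}$, $\partial\mathbb{R}^n_+=\{x_n=0\}$. Let $H=(H_{ik})$ be a trace-free symmetric two-tensor on $\mathbb{R}^n_+$ whose components are polynomials $H_{ik}(x)=\sum_{2\le|\alpha|\le d}h_{ik,\alpha}x^\alpha$, such that: $H_{in}(x)=0$ for all $x\in\mathbb{R}^n_+$ and all $i$; $\sum_k H_{ik}(x)x_k=0$ for all $x\in\partial\mathbb{R}^n_+$ and all $i$; $\partial_nH_{ik}(x)=0$ for all $x\in\partial\mathbb{R}^n_+$ and all $i,k$. Define $A_{ik}=\sum_m\partial_i\partial_mH_{mk}+\sum_m\partial_m\partial_kH_{im}-\Delta H_{ik}-\frac{1}{n-1}\sum_{m,p}\partial_m\partial_pH_{mp}\,\delta_{ik}$ and $Z_{ijkl}=\partial_i\partial_kH_{jl}-\partial_i\partial_lH_{jk}-\partial_j\partial_kH_{il}+\partial_j\partial_lH_{ik}+\frac{1}{n-2}(A_{jl}\delta_{ik}-A_{jk}\delta_{il}-A_{il}\delta_{jk}+A_{ik}\delta_{jl})$. *)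

theory Defs
  imports "HOL-Analysis.Analysis"
begin

text \<open>Points of R^n are modelled as functions nat \<Rightarrow> real, coordinates 1..n.
  Multi-indices are functions nat \<Rightarrow> nat supported in {1..n}.\<close>

definition monom :: "nat \<Rightarrow> (nat \<Rightarrow> nat) \<Rightarrow> (nat \<Rightarrow> real) \<Rightarrow> real" where
  "monom n \<alpha> x = (\<Prod>j\<in>{1..n}. x j ^ \<alpha> j)"

definition mindices :: "nat \<Rightarrow> nat \<Rightarrow> (nat \<Rightarrow> nat) set" where
  "mindices n d = {\<alpha>. (\<forall>j. j \<notin> {1..n} \<longrightarrow> \<alpha> j = 0) \<and>
                       2 \<le> (\<Sum>j\<in>{1..n}. \<alpha> j) \<and> (\<Sum>j\<in>{1..n}. \<alpha> j) \<le> d}"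

definition pd :: "nat \<Rightarrow> ((nat \<Rightarrow> real) \<Rightarrow> real) \<Rightarrow> (nat \<Rightarrow> real) \<Rightarrow> real" where
  "pd j f x = deriv (\<lambda>t. f (x(j := t))) (x j)"

definition kdelta :: "nat \<Rightarrow> nat \<Rightarrow> real" where
  "kdelta i k = (if i = k then 1 else 0)"

definition Aten :: "nat \<Rightarrow> (nat \<Rightarrow> nat \<Rightarrow> (nat \<Rightarrow> real) \<Rightarrow> real)
                     \<Rightarrow> nat \<Rightarrow> nat \<Rightarrow> (nat \<Rightarrow> real) \<Rightarrow> real" where
  "Aten n H i k x =
     (\<Sum>m\<in>{1..n}. pd i (pd m (H m k)) x)
   + (\<Sum>m\<in>{1..n}. pd m (pd k (H i m)) x)
   - (\<Sum>m\<in>{1..n}. pd m (pd m (H i k)) x)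
   - 1 / (real n - 1) * (\<Sum>m\<in>{1..n}. \<Sum>p\<in>{1..n}. pd m (pd p (H m p)) x) * kdelta i k"

definition Zten :: "nat \<Rightarrow> (nat \<Rightarrow> nat \<Rightarrow> (nat \<Rightarrow> real) \<Rightarrow> real)
                     \<Rightarrow> nat \<Rightarrow> nat \<Rightarrow> nat \<Rightarrow> nat \<Rightarrow> (nat \<Rightarrow> real) \<Rightarrow> real" where
  "Zten n H i j k l x =
     pd i (pd k (H j l)) x - pd i (pd l (H j k)) x
   - pd j (pd k (H i l)) x + pd j (pd l (H i k)) x
   + 1 / (real n - 2) *
       (Aten n H j l x * kdelta i k - Aten n H j k x * kdelta i l
        - Aten n H i l x * kdelta j k + Aten n H i k x * kdelta j l)"

end

theory Submission
  imports Defs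
begin

(*
  H is a finite sum of homogeneous components, and every hypothesis of the
  theorem is homogeneous under the scaling x \<mapsto> t x, so each hypothesis passes to each
  component.  It therefore suffices to treat a homogeneous H of degree k \<ge> 2.

  Restricting a homogeneous H to the boundary x_n = 0 gives a family g_ac of polynomials in the
  tangential variables y = (x_1, ..., x_{n-1}) that is symmetric, trace-free, orthogonal to y
  and has vanishing linearised Weyl-type tensor; the components Z_anan = 0 identify the
  boundary values of A_ac with a tangential expression in g.  Contracting the Weyl-type
  condition with y_b y_d and taking divergences, one finds that the double divergence S,
  then the divergences D_c, and finally the g_ac themselves satisfy equations
  \<mu> p = |y|^2 \<Delta>p with \<mu> outside the range allowed for polynomials of their degree; such
  polynomials vanish, by induction on the degree.
*)

section \<open>Polynomial functions on R^n\<close>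

text \<open>Total degree of a multi-index and the multi-index obtained by lowering the i-th exponent
  (the exponent pattern of the i-th partial derivative of a monomial).\<close>

definition mdeg :: "nat \<Rightarrow> (nat \<Rightarrow> nat) \<Rightarrow> nat" where
  "mdeg n \<alpha> = (\<Sum>j\<in>{1..n}. \<alpha> j)"

definition lower :: "nat \<Rightarrow> (nat \<Rightarrow> nat) \<Rightarrow> (nat \<Rightarrow> nat)" where
  "lower i \<alpha> = \<alpha>(i := \<alpha> i - 1)"

definition monom_span :: "nat \<Rightarrow> (nat \<Rightarrow> nat) set \<Rightarrow> ((nat \<Rightarrow> real) \<Rightarrow> real) \<Rightarrow> bool" where
  "monom_span n D f \<longleftrightarrow>
     (\<exists>(A::nat set) c e. finite A \<and> e ` A \<subseteq> D \<and> (\<forall>x. f x = (\<Sum>a\<in>A. c a * monom n (e a) x)))"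

abbreviation polyfun :: "nat \<Rightarrow> ((nat \<Rightarrow> real) \<Rightarrow> real) \<Rightarrow> bool" where
  "polyfun n \<equiv> monom_span n UNIV"

abbreviation homog :: "nat \<Rightarrow> nat \<Rightarrow> ((nat \<Rightarrow> real) \<Rightarrow> real) \<Rightarrow> bool" where
  "homog n k \<equiv> monom_span n {\<alpha>. mdeg n \<alpha> = k}"

lemma monom_spanI:
  fixes A :: "'a set"
  assumes "finite A" "e ` A \<subseteq> D" "\<And>x. f x = (\<Sum>a\<in>A. c a * monom n (e a) x)"
  shows "monom_span n D f"
proof -
  obtain g where g: "bij_betw g {0..<card A} A" using ex_bij_betw_nat_finite[OF assms(1)] by blast
  have "\<And>x. f x = (\<Sum>a\<in>{0..<card A}. c (g a) * monom n (e (g a)) x)"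
    unfolding assms(3) using sum.reindex_bij_betw[OF g, symmetric] by blast
  moreover have "(e \<circ> g) ` {0..<card A} \<subseteq> D" using g assms(2) bij_betw_imp_surj_on by fastforce
  ultimately show ?thesis unfolding monom_span_def
    by (intro exI[of _ "{0..<card A}"] exI[of _ "c \<circ> g"] exI[of _ "e \<circ> g"]) auto
qed

lemma monom_span_mono: "monom_span n D f \<Longrightarrow> D \<subseteq> D' \<Longrightarrow> monom_span n D' f"
  unfolding monom_span_def by blast

lemma homog_polyfun: "homog n k f \<Longrightarrow> polyfun n f"
  by (erule monom_span_mono) simp

lemma monom_span_zero: "monom_span n D (\<lambda>x. 0)"
  unfolding monom_span_def by (intro exI[of _ "{}"]) auto

lemma monom_span_empty: "monom_span n {} f \<Longrightarrow> f x = 0"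
  unfolding monom_span_def by auto

lemma monom_span_add:
  assumes "monom_span n D f" "monom_span n D g"
  shows "monom_span n D (\<lambda>x. f x + g x)"
proof -
  obtain A :: "nat set" and c e where a: "finite A" "e ` A \<subseteq> D" "\<And>x. f x = (\<Sum>a\<in>A. c a * monom n (e a) x)"
    using assms(1) unfolding monom_span_def by blast
  obtain B :: "nat set" and d e' where b: "finite B" "e' ` B \<subseteq> D" "\<And>x. g x = (\<Sum>b\<in>B. d b * monom n (e' b) x)"
    using assms(2) unfolding monom_span_def by blast
  show ?thesis
    by (rule monom_spanI[of "A <+> B" "case_sum e e'" D _ "case_sum c d"])
       (use a b in \<open>auto simp: sum.Plus\<close>)
qed

lemma monom_span_cmult:
  assumes "monom_span n D f"
  shows "monom_span n D (\<lambda>x. r * f x)"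
proof -
  obtain A :: "nat set" and c e where a: "finite A" "e ` A \<subseteq> D" "\<And>x. f x = (\<Sum>a\<in>A. c a * monom n (e a) x)"
    using assms unfolding monom_span_def by blast
  show ?thesis
    by (rule monom_spanI[of A e D _ "\<lambda>a. r * c a"]) (use a in \<open>auto simp: sum_distrib_left mult.assoc\<close>)
qed

lemma monom_span_diff: "monom_span n D f \<Longrightarrow> monom_span n D g \<Longrightarrow> monom_span n D (\<lambda>x. f x - g x)"
  using monom_span_add[of n D f "\<lambda>x. (-1) * g x"] monom_span_cmult[of n D g "-1"] by simp

lemma monom_span_sum:
  assumes "finite S" "\<And>i. i \<in> S \<Longrightarrow> monom_span n D (f i)"
  shows "monom_span n D (\<lambda>x. \<Sum>i\<in>S. f i x)"
  using assms by (induction S rule: finite_induct) (auto intro: monom_span_zero monom_span_add)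

lemma monom_mult: "monom n (\<lambda>j. \<alpha> j + \<beta> j) x = monom n \<alpha> x * monom n \<beta> x"
  unfolding monom_def by (simp add: power_add prod.distrib)

lemma monom_span_mult:
  assumes "monom_span n D f" "monom_span n D' g"
    and E: "\<And>\<alpha> \<beta>. \<alpha> \<in> D \<Longrightarrow> \<beta> \<in> D' \<Longrightarrow> (\<lambda>j. \<alpha> j + \<beta> j) \<in> E"
  shows "monom_span n E (\<lambda>x. f x * g x)"
proof -
  obtain A :: "nat set" and c e where a: "finite A" "e ` A \<subseteq> D" "\<And>x. f x = (\<Sum>a\<in>A. c a * monom n (e a) x)"
    using assms(1) unfolding monom_span_def by blast
  obtain B :: "nat set" and d e' where b: "finite B" "e' ` B \<subseteq> D'" "\<And>x. g x = (\<Sum>b\<in>B. d b * monom n (e' b) x)"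
    using assms(2) unfolding monom_span_def by blast
  have eq: "f x * g x = (\<Sum>p\<in>A \<times> B. (c (fst p) * d (snd p)) * monom n (\<lambda>j. e (fst p) j + e' (snd p) j) x)" for x
  proof -
    have "f x * g x = (\<Sum>a\<in>A. \<Sum>b\<in>B. (c a * monom n (e a) x) * (d b * monom n (e' b) x))"
      using a b by (simp add: sum_product)
    also have "\<dots> = (\<Sum>p\<in>A \<times> B. (c (fst p) * monom n (e (fst p)) x) * (d (snd p) * monom n (e' (snd p)) x))"
      by (simp add: sum.cartesian_product split_def)
    finally show ?thesis by (simp add: monom_mult mult_ac)
  qed
  have sub: "(\<lambda>p j. e (fst p) j + e' (snd p) j) ` (A \<times> B) \<subseteq> E"
    using a(2) b(2) by (auto intro!: E)
  have "finite (A \<times> B)" using a(1) b(1) by simp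
  then have "monom_span n E (\<lambda>x. \<Sum>p\<in>A \<times> B. (c (fst p) * d (snd p)) * monom n (\<lambda>j. e (fst p) j + e' (snd p) j) x)"
    by (rule monom_spanI[OF _ sub, where c = "\<lambda>p. c (fst p) * d (snd p)"]) simp
  then show ?thesis by (simp only: eq)
qed

lemma polyfun_mult: "polyfun n f \<Longrightarrow> polyfun n g \<Longrightarrow> polyfun n (\<lambda>x. f x * g x)"
  by (rule monom_span_mult) auto

lemma homog_mult: "homog n j f \<Longrightarrow> homog n k g \<Longrightarrow> homog n (j + k) (\<lambda>x. f x * g x)"
  by (rule monom_span_mult) (auto simp: mdeg_def sum.distrib)

lemma monom_line:
  assumes "i \<in> {1..n}"
  shows "monom n \<alpha> (x(i := t)) = t ^ \<alpha> i * (\<Prod>j\<in>{1..n} - {i}. x j ^ \<alpha> j)"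
proof -
  have "monom n \<alpha> (x(i := t)) = (x(i := t)) i ^ \<alpha> i * (\<Prod>j\<in>{1..n} - {i}. (x(i := t)) j ^ \<alpha> j)"
    unfolding monom_def by (rule prod.remove[OF _ assms]) simp
  also have "(\<Prod>j\<in>{1..n} - {i}. (x(i := t)) j ^ \<alpha> j) = (\<Prod>j\<in>{1..n} - {i}. x j ^ \<alpha> j)"
    by (rule prod.cong) auto
  finally show ?thesis by (simp only: fun_upd_same)
qed

lemma monom_split:
  "i \<in> {1..n} \<Longrightarrow> monom n \<alpha> x = x i ^ \<alpha> i * (\<Prod>j\<in>{1..n} - {i}. x j ^ \<alpha> j)"
  using monom_line[of i n \<alpha> x "x i"] by simp

lemma monom_lower:
  assumes "i \<in> {1..n}"
  shows "monom n (lower i \<alpha>) x = x i ^ (\<alpha> i - 1) * (\<Prod>j\<in>{1..n} - {i}. x j ^ \<alpha> j)"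
proof -
  have "(\<Prod>j\<in>{1..n} - {i}. x j ^ lower i \<alpha> j) = (\<Prod>j\<in>{1..n} - {i}. x j ^ \<alpha> j)"
    by (rule prod.cong) (auto simp: lower_def)
  then show ?thesis using monom_split[OF assms, of "lower i \<alpha>" x] by (simp add: lower_def)
qed

lemma homog_coord:
  assumes "a \<in> {1..n}"
  shows "homog n 1 (\<lambda>x. x a)"
proof -
  let ?\<epsilon> = "\<lambda>j. if j = a then 1 else 0 :: nat"
  have "mdeg n ?\<epsilon> = 1" unfolding mdeg_def using assms by (simp add: sum.delta)
  moreover have "x a = 1 * monom n ?\<epsilon> x" for x
    using monom_split[OF assms, of ?\<epsilon>] by simp
  ultimately show ?thesis by (intro monom_spanI[of "{()}" "\<lambda>_. ?\<epsilon>"]) auto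
qed

lemma polyfun_coord: "a \<in> {1..n} \<Longrightarrow> polyfun n (\<lambda>x. x a)"
  by (rule homog_polyfun[OF homog_coord])

lemma mdeg_lower:
  assumes "i \<in> {1..n}" "\<alpha> i > 0"
  shows "mdeg n (lower i \<alpha>) = mdeg n \<alpha> - 1"
proof -
  have "mdeg n \<beta> = \<beta> i + (\<Sum>j\<in>{1..n} - {i}. \<beta> j)" for \<beta>
    unfolding mdeg_def using sum.remove[OF _ assms(1)] by simp
  moreover have "(\<Sum>j\<in>{1..n} - {i}. lower i \<alpha> j) = (\<Sum>j\<in>{1..n} - {i}. \<alpha> j)"
    by (rule sum.cong) (auto simp: lower_def)
  ultimately show ?thesis using assms(2) by (simp add: lower_def)
qed

lemma DERIV_monom:
  assumes "i \<in> {1..n}"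
  shows "((\<lambda>t. monom n \<alpha> (x(i := t))) has_real_derivative
           real (\<alpha> i) * monom n (lower i \<alpha>) x) (at (x i))"
proof -
  let ?C = "\<Prod>j\<in>{1..n} - {i}. x j ^ \<alpha> j"
  have "((\<lambda>t. t ^ \<alpha> i * ?C) has_real_derivative real (\<alpha> i) * x i ^ (\<alpha> i - Suc 0) * ?C) (at (x i))"
    by (intro DERIV_cmult_right DERIV_pow)
  then show ?thesis using monom_line[OF assms] monom_lower[OF assms, of \<alpha> x] by (simp add: mult.assoc)
qed

lemma DERIV_monom_sum:
  assumes "i \<in> {1..n}"
  shows "((\<lambda>t. \<Sum>a\<in>A. c a * monom n (e a) (x(i := t))) has_real_derivative
           (\<Sum>a\<in>A. c a * (real (e a i) * monom n (lower i (e a)) x))) (at (x i))"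
  by (intro DERIV_sum DERIV_cmult DERIV_monom[OF assms])

lemma pd_monom_sum:
  assumes "\<And>x. f x = (\<Sum>a\<in>A. c a * monom n (e a) x)" "i \<in> {1..n}"
  shows "pd i f x = (\<Sum>a\<in>A. c a * (real (e a i) * monom n (lower i (e a)) x))"
  unfolding pd_def assms(1) by (rule DERIV_imp_deriv[OF DERIV_monom_sum[OF assms(2)]])

lemma pd_const: "pd i (\<lambda>x. c) x = 0"
  unfolding pd_def by (rule DERIV_imp_deriv[OF DERIV_const])

lemma pd_vanish: "(\<And>x. f x = 0) \<Longrightarrow> pd i f x = 0"
  using pd_const[of i 0 x] by (metis ext)

lemma polyfun_line_outside:
  assumes "polyfun n f" "i \<notin> {1..n}"
  shows "(\<lambda>t. f (x(i := t))) = (\<lambda>t. f x)"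
proof -
  obtain A :: "nat set" and c e where a: "\<And>x. f x = (\<Sum>a\<in>A. c a * monom n (e a) x)"
    using assms(1) unfolding monom_span_def by blast
  have "monom n \<alpha> (x(i := t)) = monom n \<alpha> x" for \<alpha> t
    unfolding monom_def using assms(2) by (intro prod.cong) auto
  then show ?thesis by (simp add: a)
qed

lemma pd_outside: "polyfun n f \<Longrightarrow> i \<notin> {1..n} \<Longrightarrow> pd i f x = 0"
  unfolding pd_def by (simp add: polyfun_line_outside DERIV_imp_deriv[OF DERIV_const])

lemma polyfun_DERIV:
  assumes "polyfun n f"
  shows "((\<lambda>t. f (x(i := t))) has_real_derivative pd i f x) (at (x i))"
proof (cases "i \<in> {1..n}")
  case True
  obtain A :: "nat set" and c e where a: "\<And>x. f x = (\<Sum>a\<in>A. c a * monom n (e a) x)"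
    using assms unfolding monom_span_def by blast
  show ?thesis unfolding a pd_monom_sum[OF a True] by (rule DERIV_monom_sum[OF True])
next
  case False
  then show ?thesis
    by (simp add: polyfun_line_outside[OF assms] pd_outside[OF assms] DERIV_const)
qed

lemma monom_span_pd:
  assumes "monom_span n D f"
  shows "monom_span n (lower i ` {\<alpha>\<in>D. 0 < \<alpha> i}) (pd i f)"
proof (cases "i \<in> {1..n}")
  case True
  obtain A :: "nat set" and c e where a: "finite A" "e ` A \<subseteq> D" "\<And>x. f x = (\<Sum>a\<in>A. c a * monom n (e a) x)"
    using assms unfolding monom_span_def by blast
  have "pd i f x = (\<Sum>a\<in>{a\<in>A. 0 < e a i}. (c a * real (e a i)) * monom n (lower i (e a)) x)" for x
  proof -
    have "pd i f x = (\<Sum>a\<in>A. (c a * real (e a i)) * monom n (lower i (e a)) x)"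
      by (simp add: pd_monom_sum[OF a(3) True] mult_ac)
    also have "\<dots> = (\<Sum>a\<in>{a\<in>A. 0 < e a i}. (c a * real (e a i)) * monom n (lower i (e a)) x)"
      by (rule sum.mono_neutral_right) (use a in auto)
    finally show ?thesis .
  qed
  then show ?thesis by (rule monom_spanI[rotated 2]) (use a in auto)
next
  case False
  have "pd i f = (\<lambda>x. 0)" using pd_outside[OF monom_span_mono[OF assms] False] by auto
  then show ?thesis by (simp add: monom_span_zero)
qed

lemma polyfun_pd: "polyfun n f \<Longrightarrow> polyfun n (pd i f)"
  by (rule monom_span_mono[OF monom_span_pd]) auto

lemma homog_pd:
  assumes "homog n k f"
  shows "homog n (k - 1) (pd i f)"
proof (cases "i \<in> {1..n}")
  case True
  then show ?thesis by (intro monom_span_mono[OF monom_span_pd[OF assms]]) (auto simp: mdeg_lower)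
next
  case False
  then have "pd i f = (\<lambda>x. 0)" using pd_outside[OF homog_polyfun[OF assms]] by blast
  then show ?thesis by (simp add: monom_span_zero)
qed

lemma homog_pd2: "homog n k f \<Longrightarrow> homog n (k - 2) (pd i (pd j f))"
  using homog_pd[OF homog_pd[of n k f j], of i] by (simp add: numeral_2_eq_2)

lemma homog0_pd:
  assumes "homog n 0 f"
  shows "pd i f x = 0"
proof (cases "i \<in> {1..n}")
  case True
  then have "monom_span n {} (pd i f)"
    by (intro monom_span_mono[OF monom_span_pd[OF assms]]) (auto simp: mdeg_def)
  then show ?thesis by (rule monom_span_empty)
qed (rule pd_outside[OF homog_polyfun[OF assms]])

lemma homog1_pd2: "homog n 1 f \<Longrightarrow> pd i (pd j f) x = 0"
  using homog0_pd homog_pd[of n 1 f j] by simp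

lemma pd_add: "polyfun n f \<Longrightarrow> polyfun n g \<Longrightarrow> pd i (\<lambda>x. f x + g x) x = pd i f x + pd i g x"
  unfolding pd_def[of i "\<lambda>x. f x + g x"]
  by (rule DERIV_imp_deriv, intro DERIV_add polyfun_DERIV)

lemma pd_diff: "polyfun n f \<Longrightarrow> polyfun n g \<Longrightarrow> pd i (\<lambda>x. f x - g x) x = pd i f x - pd i g x"
  unfolding pd_def[of i "\<lambda>x. f x - g x"]
  by (rule DERIV_imp_deriv, intro DERIV_diff polyfun_DERIV)

lemma pd_mult:
  "polyfun n f \<Longrightarrow> polyfun n g \<Longrightarrow> pd i (\<lambda>x. f x * g x) x = pd i f x * g x + f x * pd i g x"
  unfolding pd_def[of i "\<lambda>x. f x * g x"]
  using DERIV_mult[OF polyfun_DERIV[of n f x i] polyfun_DERIV[of n g x i]]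
  by (intro DERIV_imp_deriv) (simp add: mult.commute)

lemma pd_cmult: "polyfun n f \<Longrightarrow> pd i (\<lambda>x. c * f x) x = c * pd i f x"
  unfolding pd_def[of i "\<lambda>x. c * f x"]
  by (rule DERIV_imp_deriv, intro DERIV_cmult polyfun_DERIV)

lemma pd_sum:
  "finite S \<Longrightarrow> (\<And>j. j \<in> S \<Longrightarrow> polyfun n (f j)) \<Longrightarrow>
   pd i (\<lambda>x. \<Sum>j\<in>S. f j x) x = (\<Sum>j\<in>S. pd i (f j) x)"
  unfolding pd_def[of i "\<lambda>x. \<Sum>j\<in>S. f j x"]
  by (rule DERIV_imp_deriv, intro DERIV_sum polyfun_DERIV) auto

lemma pd_coord: "pd i (\<lambda>x. x a) x = kdelta i a"
proof -
  have "(\<lambda>t. (x(i := t)) a) = (if i = a then (\<lambda>t. t) else (\<lambda>t. x a))" by auto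
  then show ?thesis unfolding pd_def kdelta_def
    by (simp add: DERIV_imp_deriv[OF DERIV_ident] DERIV_imp_deriv[OF DERIV_const])
qed

lemma pd_coord_mult:
  assumes "polyfun n f" "b \<in> {1..n}"
  shows "pd c (\<lambda>x. x b * f x) x = kdelta c b * f x + x b * pd c f x"
  using pd_mult[OF polyfun_coord[OF assms(2)] assms(1), of c x] pd_coord by simp

lemma lower_commute: "i \<noteq> j \<Longrightarrow> lower i (lower j \<alpha>) = lower j (lower i \<alpha>)"
  unfolding lower_def by (auto simp: fun_upd_twist)

lemma schwarz:
  assumes "polyfun n f"
  shows "pd i (pd j f) x = pd j (pd i f) x"
proof (cases "i \<in> {1..n} \<and> j \<in> {1..n}")
  case True
  obtain A :: "nat set" and c e where a: "\<And>x. f x = (\<Sum>a\<in>A. c a * monom n (e a) x)"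
    using assms unfolding monom_span_def by blast
  have pd1: "\<And>l x. l \<in> {1..n} \<Longrightarrow> pd l f x = (\<Sum>a\<in>A. (c a * real (e a l)) * monom n (lower l (e a)) x)"
    using pd_monom_sum[OF a] by (simp add: mult_ac)
  have "pd i (pd j f) x = (\<Sum>a\<in>A. (c a * real (e a j)) * (real (lower j (e a) i) * monom n (lower i (lower j (e a))) x))"
    using True by (simp add: pd_monom_sum[OF pd1])
  also have "\<dots> = (\<Sum>a\<in>A. (c a * real (e a i)) * (real (lower i (e a) j) * monom n (lower j (lower i (e a))) x))"
    by (rule sum.cong[OF refl], cases "i = j") (auto simp: lower_commute, auto simp: lower_def)
  also have "\<dots> = pd j (pd i f) x"
    using True by (simp add: pd_monom_sum[OF pd1])
  finally show ?thesis .
next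
  case False
  then show ?thesis using pd_outside polyfun_pd[OF assms] assms
    by (metis pd_vanish)
qed

lemma schwarz_fun: "polyfun n f \<Longrightarrow> pd i (pd j f) = pd j (pd i f)"
  using schwarz by blast

lemma euler_monom:
  assumes "i \<in> {1..n}"
  shows "x i * (real (\<alpha> i) * monom n (lower i \<alpha>) x) = real (\<alpha> i) * monom n \<alpha> x"
proof (cases "\<alpha> i")
  case (Suc m)
  then show ?thesis using monom_split[OF assms, of \<alpha> x] monom_lower[OF assms, of \<alpha> x]
    by (simp add: mult_ac)
qed simp

lemma euler:
  assumes "homog n k f"
  shows "(\<Sum>i\<in>{1..n}. x i * pd i f x) = real k * f x"
proof -
  obtain A :: "nat set" and c e where a: "e ` A \<subseteq> {\<alpha>. mdeg n \<alpha> = k}"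
      "\<And>x. f x = (\<Sum>a\<in>A. c a * monom n (e a) x)"
    using assms unfolding monom_span_def by blast
  have "(\<Sum>i\<in>{1..n}. x i * pd i f x) = (\<Sum>i\<in>{1..n}. \<Sum>a\<in>A. c a * (real (e a i) * monom n (e a) x))"
  proof (intro sum.cong refl)
    fix i assume i: "i \<in> {1..n}"
    have "x i * pd i f x = (\<Sum>a\<in>A. c a * (x i * (real (e a i) * monom n (lower i (e a)) x)))"
      by (simp add: pd_monom_sum[OF a(2) i] sum_distrib_left mult_ac)
    then show "x i * pd i f x = (\<Sum>a\<in>A. c a * (real (e a i) * monom n (e a) x))"
      by (simp add: euler_monom[OF i])
  qed
  also have "\<dots> = (\<Sum>a\<in>A. c a * (real (mdeg n (e a)) * monom n (e a) x))"
    unfolding mdeg_def by (subst sum.swap) (simp add: sum_distrib_left sum_distrib_right)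
  also have "\<dots> = real k * f x"
    using a by (auto simp: sum_distrib_left mult_ac intro!: sum.cong)
  finally show ?thesis .
qed

lemma homog_scale:
  assumes "homog n k f"
  shows "f (\<lambda>j. t * x j) = t ^ k * f x"
proof -
  obtain A :: "nat set" and c e where a: "e ` A \<subseteq> {\<alpha>. mdeg n \<alpha> = k}"
      "\<And>x. f x = (\<Sum>a\<in>A. c a * monom n (e a) x)"
    using assms unfolding monom_span_def by blast
  have "monom n \<alpha> (\<lambda>j. t * x j) = t ^ mdeg n \<alpha> * monom n \<alpha> x" for \<alpha>
    unfolding monom_def mdeg_def by (simp add: power_mult_distrib prod.distrib power_sum)
  then show ?thesis using a by (auto simp: sum_distrib_left mult_ac intro!: sum.cong)
qed

lemma homog_half_space:
  assumes "homog n k f" "\<And>x. x n \<ge> 0 \<Longrightarrow> f x = 0"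
  shows "f x = 0"
proof (cases "x n \<ge> 0")
  case False
  have "f (\<lambda>j. (-1) * x j) = (-1) ^ k * f x" by (rule homog_scale[OF assms(1)])
  then show ?thesis using False assms(2)[of "\<lambda>j. (-1) * x j"] by simp
qed (use assms(2) in simp)

section \<open>Tangential calculus on the boundary hyperplane\<close>

text \<open>Functions that do not depend on the normal coordinate x_n; these are the polynomials
  living on the boundary x_n = 0.\<close>

definition normal_indep :: "nat \<Rightarrow> ((nat \<Rightarrow> real) \<Rightarrow> real) \<Rightarrow> bool" where
  "normal_indep n f \<longleftrightarrow> (\<forall>x. f (x(n := 0)) = f x)"

lemma normal_indep_restrict: "normal_indep n (\<lambda>x. f (x(n := 0)))"
  unfolding normal_indep_def by simp

lemma normal_indep_sum: "(\<And>i. i \<in> S \<Longrightarrow> normal_indep n (f i)) \<Longrightarrow> normal_indep n (\<lambda>x. \<Sum>i\<in>S. f i x)"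
  unfolding normal_indep_def by simp

lemma monom_restrict:
  assumes "n \<ge> 1"
  shows "monom n \<alpha> (x(n := 0)) = (if \<alpha> n = 0 then 1 else 0) * monom n \<alpha> x"
  using monom_line[of n n \<alpha> x 0] monom_split[of n n \<alpha> x] assms by auto

lemma homog_restrict:
  assumes "n \<ge> 1" "homog n k f"
  shows "homog n k (\<lambda>x. f (x(n := 0)))"
proof -
  obtain A :: "nat set" and c e where a: "finite A" "e ` A \<subseteq> {\<alpha>. mdeg n \<alpha> = k}"
      "\<And>x. f x = (\<Sum>a\<in>A. c a * monom n (e a) x)"
    using assms(2) unfolding monom_span_def by blast
  have "f (x(n := 0)) = (\<Sum>a\<in>A. (c a * (if e a n = 0 then 1 else 0)) * monom n (e a) x)" for x
    using a(3) monom_restrict[OF assms(1)] by (simp add: mult_ac)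
  then show ?thesis by (rule monom_spanI[rotated 2]) (use a in auto)
qed

lemma pd_restrict:
  assumes "i \<noteq> n"
  shows "pd i (\<lambda>x. f (x(n := 0))) x = pd i f (x(n := 0))"
proof -
  have "(\<lambda>t. f ((x(i := t))(n := 0))) = (\<lambda>t. f ((x(n := 0))(i := t)))"
    using assms by (simp add: fun_upd_twist)
  then show ?thesis unfolding pd_def using assms by simp
qed

lemma pd_normal_indep_normal:
  assumes "normal_indep n f"
  shows "pd n f x = 0"
proof -
  have "(\<lambda>t. f (x(n := t))) = (\<lambda>t. f (x(n := 0)))"
    using assms unfolding normal_indep_def by (metis fun_upd_upd)
  then show ?thesis unfolding pd_def by (simp add: DERIV_imp_deriv[OF DERIV_const])
qed

lemma normal_indep_pd:
  assumes "normal_indep n f"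
  shows "normal_indep n (pd i f)"
proof (cases "i = n")
  case True
  then show ?thesis using pd_normal_indep_normal[OF assms] unfolding normal_indep_def by simp
next
  case False
  have "f = (\<lambda>x. f (x(n := 0)))" using assms unfolding normal_indep_def by auto
  then have "pd i f x = pd i f (x(n := 0))" for x using pd_restrict[OF False, of f] by metis
  then show ?thesis unfolding normal_indep_def by simp
qed

definition tang :: "nat \<Rightarrow> nat set" where
  "tang n = {1..n-1}"

lemma finite_tang [simp]: "finite (tang n)"
  by (simp add: tang_def)

lemma tang_range: "a \<in> tang n \<Longrightarrow> a \<in> {1..n}"
  by (auto simp: tang_def)

lemma tang_normal: "a \<in> tang n \<Longrightarrow> a \<noteq> n"
  by (auto simp: tang_def)

lemma card_tang: "n \<ge> 1 \<Longrightarrow> real (card (tang n)) = real n - 1"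
  by (simp add: tang_def of_nat_diff)

lemma sum_split_normal: "n \<ge> 1 \<Longrightarrow> (\<Sum>m\<in>{1..n}. f m) = f n + (\<Sum>m\<in>tang n. f m :: real)"
proof -
  assume "n \<ge> 1"
  then have "{1..n} = insert n (tang n)" "n \<notin> tang n" by (auto simp: tang_def)
  then show ?thesis by simp
qed

lemma sum_split_normal_zero:
  assumes "n \<ge> 1" "F n = 0" "\<And>m. m \<in> tang n \<Longrightarrow> F m = F' m"
  shows "(\<Sum>m\<in>{1..n}. F m) = (\<Sum>m\<in>tang n. F' m :: real)"
  unfolding sum_split_normal[OF assms(1)] using assms(2,3) by (auto intro: sum.cong)

lemma kdelta_sum: "finite S \<Longrightarrow> c \<in> S \<Longrightarrow> (\<Sum>b\<in>S. kdelta c b * f b) = f c"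
  by (simp add: kdelta_def if_distrib[of "\<lambda>t. t * _"] cong: if_cong)

lemma kdelta_sum': "finite S \<Longrightarrow> c \<in> S \<Longrightarrow> (\<Sum>b\<in>S. kdelta b c * f b) = f c"
  by (simp add: kdelta_def if_distrib[of "\<lambda>t. t * _"] cong: if_cong)

lemma sum2_kdelta:
  assumes "finite S" "a \<in> S"
  shows "(\<Sum>b\<in>S. \<Sum>d\<in>S. x b * x d * (F b * kdelta a d)) = x a * (\<Sum>b\<in>S. x b * F b)"
proof -
  have "(\<Sum>b\<in>S. \<Sum>d\<in>S. x b * x d * (F b * kdelta a d)) = (\<Sum>b\<in>S. x b * F b * (\<Sum>d\<in>S. kdelta a d * x d))"
    by (simp add: sum_distrib_left mult_ac)
  also have "\<dots> = x a * (\<Sum>b\<in>S. x b * F b)"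
    by (simp only: kdelta_sum[OF assms]) (simp add: sum_distrib_left mult_ac)
  finally show ?thesis .
qed

lemma sum2_kdelta_diag:
  assumes "finite S"
  shows "(\<Sum>b\<in>S. \<Sum>d\<in>S. x b * x d * (C * kdelta b d)) = C * (\<Sum>b\<in>S. x b * x b)"
proof -
  have "(\<Sum>d\<in>S. x b * x d * (C * kdelta b d)) = C * (x b * x b)" if "b \<in> S" for b
  proof -
    have "(\<Sum>d\<in>S. x b * x d * (C * kdelta b d)) = x b * C * (\<Sum>d\<in>S. kdelta b d * x d)"
      by (simp add: sum_distrib_left mult_ac)
    then show ?thesis using kdelta_sum[OF assms that, of x] by simp
  qed
  then show ?thesis by (simp add: sum_distrib_left)
qed

lemma euler_tang:
  assumes "n \<ge> 1" "homog n k f" "normal_indep n f"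
  shows "(\<Sum>i\<in>tang n. x i * pd i f x) = real k * f x"
proof -
  have "(\<Sum>i\<in>{1..n}. x i * pd i f x) = real k * f x" by (rule euler[OF assms(2)])
  then show ?thesis
    unfolding sum_split_normal[OF assms(1)] using pd_normal_indep_normal[OF assms(3)] by simp
qed

lemma pd_coord_mult_sum:
  assumes "\<And>b. b \<in> tang n \<Longrightarrow> polyfun n (f b)" "c \<in> tang n"
  shows "pd c (\<lambda>x. \<Sum>b\<in>tang n. x b * f b x) x = f c x + (\<Sum>b\<in>tang n. x b * pd c (f b) x)"
proof -
  have "polyfun n (\<lambda>x. x b * f b x)" if "b \<in> tang n" for b
    using polyfun_mult[OF polyfun_coord[OF tang_range[OF that]] assms(1)[OF that]] .
  then have "pd c (\<lambda>x. \<Sum>b\<in>tang n. x b * f b x) x = (\<Sum>b\<in>tang n. pd c (\<lambda>x. x b * f b x) x)"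
    by (intro pd_sum) auto
  also have "\<dots> = (\<Sum>b\<in>tang n. kdelta c b * f b x + x b * pd c (f b) x)"
    by (rule sum.cong[OF refl], rule pd_coord_mult[OF assms(1) tang_range])
  also have "\<dots> = f c x + (\<Sum>b\<in>tang n. x b * pd c (f b) x)"
    by (simp only: sum.distrib kdelta_sum[OF finite_tang assms(2)])
  finally show ?thesis .
qed

definition rsq :: "nat \<Rightarrow> (nat \<Rightarrow> real) \<Rightarrow> real" where
  "rsq n x = (\<Sum>a\<in>tang n. x a * x a)"

definition tlap :: "nat \<Rightarrow> ((nat \<Rightarrow> real) \<Rightarrow> real) \<Rightarrow> (nat \<Rightarrow> real) \<Rightarrow> real" where
  "tlap n f x = (\<Sum>a\<in>tang n. pd a (pd a f) x)"

lemma homog_rsq: "homog n 2 (rsq n)"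
proof -
  have "homog n (1 + 1) (\<lambda>x. \<Sum>a\<in>tang n. x a * x a)"
    by (intro monom_span_sum homog_mult homog_coord tang_range) auto
  then show ?thesis unfolding rsq_def[abs_def] one_add_one .
qed

lemma polyfun_rsq: "polyfun n (rsq n)"
  by (rule homog_polyfun[OF homog_rsq])

lemma pd_rsq: "c \<in> tang n \<Longrightarrow> pd c (rsq n) x = 2 * x c"
proof -
  assume c: "c \<in> tang n"
  have "pd c (rsq n) x = x c + (\<Sum>b\<in>tang n. x b * pd c (\<lambda>x. x b) x)"
    unfolding rsq_def[abs_def] by (rule pd_coord_mult_sum[OF polyfun_coord[OF tang_range] c])
  then show ?thesis using c by (simp add: pd_coord mult.commute[of _ "kdelta _ _"] kdelta_sum)
qed

lemma homog_tlap: "homog n j f \<Longrightarrow> homog n (j - 2) (tlap n f)"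
  unfolding tlap_def[abs_def] by (intro monom_span_sum homog_pd2) auto

lemma normal_indep_tlap: "normal_indep n f \<Longrightarrow> normal_indep n (tlap n f)"
  unfolding tlap_def[abs_def] by (intro normal_indep_sum normal_indep_pd)

lemma tlap_rsq_mult:
  assumes "n \<ge> 1" "homog n j g" "normal_indep n g"
  shows "tlap n (\<lambda>x. rsq n x * g x) x = rsq n x * tlap n g x + (4 * real j + 2 * (real n - 1)) * g x"
proof -
  have pg: "polyfun n g" by (rule homog_polyfun[OF assms(2)])
  have pd1: "pd a (\<lambda>x. rsq n x * g x) = (\<lambda>x. 2 * (x a * g x) + rsq n x * pd a g x)"
    if a: "a \<in> tang n" for a
    using pd_mult[OF polyfun_rsq pg, of a] pd_rsq[OF a] by (auto simp: mult_ac)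
  have pd2: "pd a (pd a (\<lambda>x. rsq n x * g x)) x
      = 2 * (g x + x a * pd a g x) + (2 * x a * pd a g x + rsq n x * pd a (pd a g) x)"
    if a: "a \<in> tang n" for a
  proof -
    note pa = polyfun_coord[OF tang_range[OF a]]
    have "pd a (pd a (\<lambda>x. rsq n x * g x)) x = 2 * pd a (\<lambda>x. x a * g x) x + pd a (\<lambda>x. rsq n x * pd a g x) x"
      unfolding pd1[OF a]
      by (simp add: pd_add[of n] pd_cmult[of n] monom_span_cmult polyfun_mult pa pg polyfun_rsq polyfun_pd)
    then show ?thesis
      by (simp add: pd_coord_mult[OF pg tang_range[OF a]] kdelta_def
                    pd_mult[OF polyfun_rsq polyfun_pd[OF pg]] pd_rsq[OF a])
  qed
  have "tlap n (\<lambda>x. rsq n x * g x) x = (\<Sum>a\<in>tang n. 2 * g x + 4 * (x a * pd a g x) + rsq n x * pd a (pd a g) x)"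
    unfolding tlap_def by (rule sum.cong[OF refl]) (simp add: pd2)
  also have "\<dots> = 2 * real (card (tang n)) * g x + 4 * (\<Sum>a\<in>tang n. x a * pd a g x) + rsq n x * tlap n g x"
    by (simp add: sum.distrib sum_distrib_left tlap_def)
  also have "\<dots> = rsq n x * tlap n g x + (4 * real j + 2 * (real n - 1)) * g x"
    unfolding card_tang[OF assms(1)] euler_tang[OF assms] by (simp add: algebra_simps)
  finally show ?thesis .
qed

lemma tlap_eigen_descend:
  assumes "n \<ge> 1" "j \<ge> 2" "homog n j p" "normal_indep n p"
    and eq: "\<And>x. \<mu> * p x = rsq n x * tlap n p x"
  shows "(\<mu> - 4 * (real j - 2) - 2 * (real n - 1)) * tlap n p x = rsq n x * tlap n (tlap n p) x"
proof -
  have "(\<lambda>x. \<mu> * p x) = (\<lambda>x. rsq n x * tlap n p x)" using eq by auto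
  moreover have "\<mu> * tlap n p x = tlap n (\<lambda>x. \<mu> * p x) x"
  proof -
    have pp: "polyfun n p" by (rule homog_polyfun[OF assms(3)])
    have "pd a (\<lambda>x. \<mu> * p x) = (\<lambda>x. \<mu> * pd a p x)" for a
      using pd_cmult[OF pp] by blast
    then show ?thesis unfolding tlap_def by (simp add: pd_cmult[OF polyfun_pd[OF pp]] sum_distrib_left)
  qed
  ultimately have "\<mu> * tlap n p x = tlap n (\<lambda>x. rsq n x * tlap n p x) x" by simp
  also have "\<dots> = rsq n x * tlap n (tlap n p) x + (4 * real (j - 2) + 2 * (real n - 1)) * tlap n p x"
    by (rule tlap_rsq_mult[OF assms(1) homog_tlap[OF assms(3)] normal_indep_tlap[OF assms(4)]])
  finally show ?thesis using assms(2) by (simp add: of_nat_diff algebra_simps)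
qed

text \<open>Boundary polynomials of degree j admit no nonzero solution of \<mu> p = |y|^2 \<Delta>p when
  \<mu> < 0 or \<mu> > j (j + n - 3): iterate the descent until the degree drops below 2.\<close>

lemma tlap_eigen_vanish:
  assumes "n \<ge> 2" "homog n j p" "normal_indep n p"
    and "\<mu> < 0 \<or> real j * (real j + real n - 3) < \<mu>"
    and "\<And>x. \<mu> * p x = rsq n x * tlap n p x"
  shows "p x = 0"
  using assms(2-)
proof (induction j arbitrary: p \<mu> x rule: less_induct)
  case (less j)
  have "0 \<le> real j * (real j + real n - 3)"
    using \<open>n \<ge> 2\<close> by (cases j) auto
  then have \<mu>0: "\<mu> \<noteq> 0" using less.prems(3) by auto
  have "tlap n p y = 0" for y
  proof (cases "j < 2")
    case True
    have "pd a (pd a p) y = 0" for a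
    proof (cases "j = 0")
      case True
      then have "\<And>z. pd a p z = 0" using homog0_pd less.prems(1) by blast
      then show ?thesis by (rule pd_vanish)
    next
      case False
      then have "j = 1" using \<open>j < 2\<close> by simp
      then show ?thesis using homog1_pd2 less.prems(1) by blast
    qed
    then show ?thesis unfolding tlap_def by simp
  next
    case False
    let ?\<mu> = "\<mu> - 4 * (real j - 2) - 2 * (real n - 1)"
    have "?\<mu> < 0 \<or> real (j - 2) * (real (j - 2) + real n - 3) < ?\<mu>"
      using less.prems(3) False \<open>n \<ge> 2\<close> by (auto simp: of_nat_diff algebra_simps)
    moreover have "?\<mu> * tlap n p x = rsq n x * tlap n (tlap n p) x" for x
      using \<open>n \<ge> 2\<close> False less.prems by (intro tlap_eigen_descend) auto
    ultimately show ?thesis using False \<open>n \<ge> 2\<close>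
      by (intro less.IH[of "j - 2" _ ?\<mu>] homog_tlap normal_indep_tlap less.prems) auto
  qed
  then show "p x = 0" using less.prems(4)[of x] \<mu>0 by simp
qed

section \<open>The tangential problem on the boundary\<close>

text \<open>For a family g of polynomials on the boundary (indexed by tangential directions a, c) we
  use the tangential divergence D_c = \<Sum>_b \<partial>_b g_bc, the double divergence S = \<Sum>_cd \<partial>_c \<partial>_d g_cd,
  the linearised Ricci operator L_ac = \<Sum>_b (\<partial>_a \<partial>_b g_bc + \<partial>_b \<partial>_c g_ab - \<partial>_b \<partial>_b g_ac),
  the tensor A_ac = ((n-2) L_ac - S \<delta>_ac)/(n-3) (which is what the A-tensor of the full problem
  becomes on the boundary) and the linearised curvature R_abcd.\<close>

definition tdiv :: "nat \<Rightarrow> (nat \<Rightarrow> nat \<Rightarrow> (nat \<Rightarrow> real) \<Rightarrow> real) \<Rightarrow> nat \<Rightarrow> (nat \<Rightarrow> real) \<Rightarrow> real" where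
  "tdiv n g c x = (\<Sum>b\<in>tang n. pd b (g b c) x)"

definition tdivdiv :: "nat \<Rightarrow> (nat \<Rightarrow> nat \<Rightarrow> (nat \<Rightarrow> real) \<Rightarrow> real) \<Rightarrow> (nat \<Rightarrow> real) \<Rightarrow> real" where
  "tdivdiv n g x = (\<Sum>c\<in>tang n. \<Sum>d\<in>tang n. pd c (pd d (g c d)) x)"

definition tlin :: "nat \<Rightarrow> (nat \<Rightarrow> nat \<Rightarrow> (nat \<Rightarrow> real) \<Rightarrow> real) \<Rightarrow> nat \<Rightarrow> nat \<Rightarrow> (nat \<Rightarrow> real) \<Rightarrow> real" where
  "tlin n g a c x = (\<Sum>b\<in>tang n. pd a (pd b (g b c)) x) + (\<Sum>b\<in>tang n. pd b (pd c (g a b)) x)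
                  - (\<Sum>b\<in>tang n. pd b (pd b (g a c)) x)"

definition tA :: "nat \<Rightarrow> (nat \<Rightarrow> nat \<Rightarrow> (nat \<Rightarrow> real) \<Rightarrow> real) \<Rightarrow> nat \<Rightarrow> nat \<Rightarrow> (nat \<Rightarrow> real) \<Rightarrow> real" where
  "tA n g a c x = ((real n - 2) * tlin n g a c x - tdivdiv n g x * kdelta a c) / (real n - 3)"

definition tcurv :: "nat \<Rightarrow> (nat \<Rightarrow> nat \<Rightarrow> (nat \<Rightarrow> real) \<Rightarrow> real) \<Rightarrow> nat \<Rightarrow> nat \<Rightarrow> nat \<Rightarrow> nat \<Rightarrow> (nat \<Rightarrow> real) \<Rightarrow> real" where
  "tcurv n g a b c d x =
     pd a (pd c (g b d)) x - pd a (pd d (g b c)) x - pd b (pd c (g a d)) x + pd b (pd d (g a c)) x"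

text \<open>Clearing denominators in the contracted Weyl-type condition (used in weyl_radial_zero).\<close>

lemma weyl_contraction_algebra:
  fixes K G kd S Y xa xc p q k Dc Da L :: real
  assumes p: "p \<noteq> 0" and q: "q \<noteq> 0"
    and h: "K*G + (kd*(-S*Y/q) - xa*((p*k*Dc - S*xc)/q) - xc*((p*k*Da - S*xa)/q) + Y*((p*L - S*kd)/q))/p = 0"
  shows "K*p*q*G - 2*S*Y*kd + 2*S*(xa*xc) - p*k*(xa*Dc + xc*Da) + p*(Y*L) = 0"
proof -
  define B where "B = kd*(-S*Y) - xa*(p*k*Dc - S*xc) - xc*(p*k*Da - S*xa) + Y*(p*L - S*kd)"
  have "kd*(-S*Y/q) - xa*((p*k*Dc - S*xc)/q) - xc*((p*k*Da - S*xa)/q) + Y*((p*L - S*kd)/q) = B/q"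
    unfolding B_def using q by (simp add: field_simps)
  then have "K*G + (B/q)/p = 0" using h by simp
  moreover have "(K*G + (B/q)/p) * (p*q) = K*G*p*q + B" using p q by (simp add: field_simps)
  ultimately have "K*G*p*q + B = 0" by simp
  then show ?thesis unfolding B_def by (simp add: algebra_simps)
qed

locale tangential_problem =
  fixes n k :: nat and g :: "nat \<Rightarrow> nat \<Rightarrow> (nat \<Rightarrow> real) \<Rightarrow> real"
  assumes dim: "n \<ge> 5" and degree: "k \<ge> 2"
    and homog_g: "\<And>a c. homog n k (g a c)"
    and indep_g: "\<And>a c. normal_indep n (g a c)"
    and sym: "\<And>a c. a \<in> tang n \<Longrightarrow> c \<in> tang n \<Longrightarrow> g a c = g c a"
    and trace_free: "\<And>x. (\<Sum>a\<in>tang n. g a a x) = 0"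
    and radial: "\<And>a x. a \<in> tang n \<Longrightarrow> (\<Sum>b\<in>tang n. x b * g b a x) = 0"
    and weyl_free: "\<And>a b c d x. a \<in> tang n \<Longrightarrow> b \<in> tang n \<Longrightarrow> c \<in> tang n \<Longrightarrow> d \<in> tang n \<Longrightarrow>
        tcurv n g a b c d x + (tA n g b d x * kdelta a c - tA n g b c x * kdelta a d
           - tA n g a d x * kdelta b c + tA n g a c x * kdelta b d) / (real n - 2) = 0"
begin

abbreviation "T \<equiv> tang n"

lemma polyfun_g: "polyfun n (g a c)"
  by (rule homog_polyfun[OF homog_g])

lemma polyfun_g1: "polyfun n (pd i (g a c))"
  by (rule polyfun_pd[OF polyfun_g])

lemma polyfun_g2: "polyfun n (pd i (pd j (g a c)))"
  by (rule polyfun_pd[OF polyfun_g1])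

lemma polyfun_g3: "polyfun n (pd i (pd j (pd l (g a c))))"
  by (rule polyfun_pd[OF polyfun_g2])

lemma homog_g1: "homog n (k - 1) (pd i (g a c))"
  by (rule homog_pd[OF homog_g])

lemma indep_g1: "normal_indep n (pd i (g a c))"
  by (rule normal_indep_pd[OF indep_g])

lemma indep_g2: "normal_indep n (pd i (pd j (g a c)))"
  by (rule normal_indep_pd[OF indep_g1])

lemma euler_g: "(\<Sum>b\<in>T. x b * pd b (g a c) x) = real k * g a c x"
  using euler_tang[OF _ homog_g indep_g] dim by simp

lemma euler_g1: "(\<Sum>b\<in>T. x b * pd b (pd i (g a c)) x) = (real k - 1) * pd i (g a c) x"
  using euler_tang[OF _ homog_g1 indep_g1] dim degree by (simp add: of_nat_diff)

lemma polyfun_tdiv: "polyfun n (tdiv n g c)"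
  unfolding tdiv_def[abs_def] by (intro monom_span_sum polyfun_g1) simp

lemma homog_tdiv: "homog n (k - 1) (tdiv n g c)"
  unfolding tdiv_def[abs_def] by (intro monom_span_sum homog_g1) simp

lemma indep_tdiv: "normal_indep n (tdiv n g c)"
  unfolding tdiv_def[abs_def] by (intro normal_indep_sum indep_g1)

lemma polyfun_tdivdiv: "polyfun n (tdivdiv n g)"
  unfolding tdivdiv_def[abs_def] by (intro monom_span_sum polyfun_g2) simp_all

lemma homog_tdivdiv: "homog n (k - 2) (tdivdiv n g)"
  unfolding tdivdiv_def[abs_def] by (intro monom_span_sum homog_pd2 homog_g) simp_all

lemma indep_tdivdiv: "normal_indep n (tdivdiv n g)"
  unfolding tdivdiv_def[abs_def] by (intro normal_indep_sum indep_g2)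

lemma polyfun_tlin: "polyfun n (\<lambda>x. tlin n g a c x)"
  unfolding tlin_def by (intro monom_span_sum monom_span_add monom_span_diff polyfun_g2) simp_all

lemma euler_tdiv: "(\<Sum>b\<in>T. x b * pd b (tdiv n g c) x) = (real k - 1) * tdiv n g c x"
  using euler_tang[OF _ homog_tdiv indep_tdiv] dim degree by (simp add: of_nat_diff)

lemma euler_tdivdiv: "(\<Sum>b\<in>T. x b * pd b (tdivdiv n g) x) = (real k - 2) * tdivdiv n g x"
  using euler_tang[OF _ homog_tdivdiv indep_tdivdiv] dim degree by (simp add: of_nat_diff)

lemma card_T: "real (card T) = real n - 1"
  using card_tang dim by simp

lemma polyfun_coord_T: "a \<in> T \<Longrightarrow> polyfun n (\<lambda>x. x a)"
  by (rule polyfun_coord[OF tang_range])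

lemma radial_pd:
  assumes "e \<in> T" "f \<in> T"
  shows "(\<Sum>b\<in>T. x b * pd e (g b f) x) = - g e f x"
proof -
  have "pd e (\<lambda>x. \<Sum>b\<in>T. x b * g b f x) x = 0" by (rule pd_vanish) (rule radial[OF assms(2)])
  moreover have "pd e (\<lambda>x. \<Sum>b\<in>T. x b * g b f x) x = g e f x + (\<Sum>b\<in>T. x b * pd e (g b f) x)"
    by (rule pd_coord_mult_sum[OF polyfun_g assms(1)])
  ultimately show ?thesis by simp
qed

lemma radial_pd2:
  assumes "d \<in> T" "e \<in> T" "f \<in> T"
  shows "(\<Sum>b\<in>T. x b * pd d (pd e (g b f)) x) = - pd d (g e f) x - pd e (g d f) x"
proof -
  have "pd d (\<lambda>x. (\<Sum>b\<in>T. x b * pd e (g b f) x) + g e f x) x = 0"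
    by (rule pd_vanish) (simp add: radial_pd[OF assms(2,3)])
  moreover have "pd d (\<lambda>x. (\<Sum>b\<in>T. x b * pd e (g b f) x) + g e f x) x
       = pd d (\<lambda>x. \<Sum>b\<in>T. x b * pd e (g b f) x) x + pd d (g e f) x"
    by (rule pd_add[of n]) (auto intro!: monom_span_sum polyfun_mult polyfun_coord_T polyfun_g1 polyfun_g)
  moreover have "pd d (\<lambda>x. \<Sum>b\<in>T. x b * pd e (g b f) x) x
       = pd e (g d f) x + (\<Sum>b\<in>T. x b * pd d (pd e (g b f)) x)"
    by (rule pd_coord_mult_sum[OF polyfun_g1 assms(1)])
  ultimately show ?thesis by simp
qed

lemma trace_free_pd: "(\<Sum>b\<in>T. pd c (g b b) x) = 0"
proof -
  have "pd c (\<lambda>x. \<Sum>b\<in>T. g b b x) x = (\<Sum>b\<in>T. pd c (g b b) x)"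
    by (rule pd_sum) (auto intro: polyfun_g)
  moreover have "pd c (\<lambda>x. \<Sum>b\<in>T. g b b x) x = 0" by (rule pd_vanish) (rule trace_free)
  ultimately show ?thesis by simp
qed

lemma radial_tdiv: "(\<Sum>c\<in>T. x c * tdiv n g c x) = 0"
proof -
  have "(\<Sum>c\<in>T. x c * tdiv n g c x) = (\<Sum>b\<in>T. \<Sum>c\<in>T. x c * pd b (g c b) x)"
    unfolding tdiv_def sum_distrib_left
    by (subst sum.swap) (intro sum.cong refl, simp add: sym)
  also have "\<dots> = (\<Sum>b\<in>T. - g b b x)" by (intro sum.cong refl radial_pd) auto
  also have "\<dots> = 0" using trace_free by (simp add: sum_negf)
  finally show ?thesis .
qed

lemma radial_tlin:
  assumes c: "c \<in> T"
  shows "(\<Sum>a\<in>T. x a * tlin n g a c x) = real k * tdiv n g c x"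
proof -
  have s1: "(\<Sum>a\<in>T. x a * (\<Sum>b\<in>T. pd a (pd b (g b c)) x)) = (real k - 1) * tdiv n g c x"
  proof -
    have "(\<Sum>a\<in>T. x a * (\<Sum>b\<in>T. pd a (pd b (g b c)) x)) = (\<Sum>b\<in>T. \<Sum>a\<in>T. x a * pd a (pd b (g b c)) x)"
      unfolding sum_distrib_left by (rule sum.swap)
    also have "\<dots> = (\<Sum>b\<in>T. (real k - 1) * pd b (g b c) x)" by (intro sum.cong refl euler_g1)
    finally show ?thesis unfolding tdiv_def by (simp add: sum_distrib_left)
  qed
  have s2: "(\<Sum>a\<in>T. x a * (\<Sum>b\<in>T. pd b (pd c (g a b)) x)) = - tdiv n g c x"
  proof -
    have "(\<Sum>a\<in>T. x a * (\<Sum>b\<in>T. pd b (pd c (g a b)) x)) = (\<Sum>b\<in>T. \<Sum>a\<in>T. x a * pd b (pd c (g a b)) x)"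
      unfolding sum_distrib_left by (rule sum.swap)
    also have "\<dots> = (\<Sum>b\<in>T. - pd b (g c b) x - pd c (g b b) x)" by (intro sum.cong refl radial_pd2 c) auto
    also have "\<dots> = - (\<Sum>b\<in>T. pd b (g b c) x) - (\<Sum>b\<in>T. pd c (g b b) x)"
      using c by (simp add: sum_subtractf sum_negf sym)
    finally show ?thesis unfolding tdiv_def trace_free_pd by simp
  qed
  have s3: "(\<Sum>a\<in>T. x a * (\<Sum>b\<in>T. pd b (pd b (g a c)) x)) = - 2 * tdiv n g c x"
  proof -
    have "(\<Sum>a\<in>T. x a * (\<Sum>b\<in>T. pd b (pd b (g a c)) x)) = (\<Sum>b\<in>T. \<Sum>a\<in>T. x a * pd b (pd b (g a c)) x)"
      unfolding sum_distrib_left by (rule sum.swap)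
    also have "\<dots> = (\<Sum>b\<in>T. - pd b (g b c) x - pd b (g b c) x)" by (intro sum.cong refl radial_pd2 c) auto
    finally show ?thesis unfolding tdiv_def by (simp add: sum_subtractf sum_negf sum_distrib_left)
  qed
  have "(\<Sum>a\<in>T. x a * tlin n g a c x) = (\<Sum>a\<in>T. x a * (\<Sum>b\<in>T. pd a (pd b (g b c)) x))
      + (\<Sum>a\<in>T. x a * (\<Sum>b\<in>T. pd b (pd c (g a b)) x)) - (\<Sum>a\<in>T. x a * (\<Sum>b\<in>T. pd b (pd b (g a c)) x))"
    unfolding tlin_def by (simp add: algebra_simps sum.distrib sum_subtractf)
  then show ?thesis using s1 s2 s3 by (simp add: algebra_simps)
qed

lemma tlin_sym:
  assumes "a \<in> T" "c \<in> T"
  shows "tlin n g a c x = tlin n g c a x"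
proof -
  have e1: "(\<Sum>b\<in>T. pd a (pd b (g b c)) x) = (\<Sum>b\<in>T. pd b (pd a (g c b)) x)"
    by (intro sum.cong refl) (simp add: sym assms schwarz[OF polyfun_g])
  have e2: "(\<Sum>b\<in>T. pd b (pd c (g a b)) x) = (\<Sum>b\<in>T. pd c (pd b (g b a)) x)"
    by (intro sum.cong refl) (simp add: sym assms schwarz[OF polyfun_g])
  show ?thesis unfolding tlin_def e1 e2 using sym[OF assms] by simp
qed

lemma tA_sym: "a \<in> T \<Longrightarrow> c \<in> T \<Longrightarrow> tA n g a c x = tA n g c a x"
  unfolding tA_def using tlin_sym by (simp add: kdelta_def)

lemma radial_tA:
  assumes c: "c \<in> T"
  shows "(\<Sum>b\<in>T. x b * tA n g b c x)
    = ((real n - 2) * real k * tdiv n g c x - tdivdiv n g x * x c) / (real n - 3)"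
proof -
  have "(\<Sum>b\<in>T. x b * tA n g b c x)
      = (\<Sum>b\<in>T. x b * ((real n - 2) * tlin n g b c x - tdivdiv n g x * kdelta b c)) / (real n - 3)"
    unfolding tA_def sum_divide_distrib by (intro sum.cong refl) simp
  also have "(\<Sum>b\<in>T. x b * ((real n - 2) * tlin n g b c x - tdivdiv n g x * kdelta b c))
      = (real n - 2) * (\<Sum>b\<in>T. x b * tlin n g b c x) - tdivdiv n g x * (\<Sum>b\<in>T. kdelta b c * x b)"
    by (simp add: sum_subtractf sum.distrib sum_distrib_left algebra_simps)
  also have "\<dots> = (real n - 2) * real k * tdiv n g c x - tdivdiv n g x * x c"
    using radial_tlin[OF c] kdelta_sum'[OF finite_tang c] by simp
  finally show ?thesis .
qed

lemma radial2_tA: "(\<Sum>b\<in>T. \<Sum>d\<in>T. x b * x d * tA n g b d x) = - tdivdiv n g x * rsq n x / (real n - 3)"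
proof -
  have "(\<Sum>b\<in>T. \<Sum>d\<in>T. x b * x d * tA n g b d x) = (\<Sum>d\<in>T. x d * (\<Sum>b\<in>T. x b * tA n g b d x))"
    by (subst sum.swap) (simp add: sum_distrib_left mult_ac)
  also have "\<dots> = (\<Sum>d\<in>T. x d * ((real n - 2) * real k * tdiv n g d x - tdivdiv n g x * x d)) / (real n - 3)"
    unfolding sum_divide_distrib by (intro sum.cong refl) (simp add: radial_tA)
  also have "(\<Sum>d\<in>T. x d * ((real n - 2) * real k * tdiv n g d x - tdivdiv n g x * x d))
     = (real n - 2) * real k * (\<Sum>d\<in>T. x d * tdiv n g d x) - tdivdiv n g x * rsq n x"
    unfolding rsq_def by (simp add: sum_subtractf sum.distrib sum_distrib_left algebra_simps)
  also have "\<dots> = - tdivdiv n g x * rsq n x" using radial_tdiv by simp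
  finally show ?thesis by simp
qed

subsection \<open>Contracting the Weyl-type condition with y_b y_d\<close>

text \<open>The four second-derivative terms of R_abcd, contracted with y_b y_d, reduce to multiples
  of g_ac by the radial condition and Euler's identity.\<close>

lemma radial2_pd_ac:
  assumes a: "a \<in> T" and c: "c \<in> T"
  shows "(\<Sum>b\<in>T. \<Sum>d\<in>T. x b * x d * pd a (pd c (g b d)) x) = 2 * g a c x"
proof -
  have "(\<Sum>b\<in>T. \<Sum>d\<in>T. x b * x d * pd a (pd c (g b d)) x)
      = (\<Sum>b\<in>T. x b * (\<Sum>d\<in>T. x d * pd a (pd c (g d b)) x))"
    by (intro sum.cong refl) (simp add: sum_distrib_left mult_ac sym)
  also have "\<dots> = (\<Sum>b\<in>T. x b * (- pd a (g c b) x - pd c (g a b) x))"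
    by (intro sum.cong refl) (simp add: radial_pd2 a c)
  also have "\<dots> = - (\<Sum>b\<in>T. x b * pd a (g b c) x) - (\<Sum>b\<in>T. x b * pd c (g b a) x)"
    by (simp add: algebra_simps sum_subtractf sum.distrib sum_negf sym a c)
  also have "\<dots> = 2 * g a c x" using radial_pd[OF a c] radial_pd[OF c a] sym[OF a c] by simp
  finally show ?thesis .
qed

lemma radial2_pd_ad:
  assumes a: "a \<in> T" and c: "c \<in> T"
  shows "(\<Sum>b\<in>T. \<Sum>d\<in>T. x b * x d * pd a (pd d (g b c)) x) = - (real k - 1) * g a c x"
proof -
  have "(\<Sum>b\<in>T. \<Sum>d\<in>T. x b * x d * pd a (pd d (g b c)) x)
      = (\<Sum>b\<in>T. x b * (\<Sum>d\<in>T. x d * pd d (pd a (g b c)) x))"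
    by (intro sum.cong refl) (simp add: sum_distrib_left mult_ac schwarz[OF polyfun_g])
  also have "\<dots> = (real k - 1) * (\<Sum>b\<in>T. x b * pd a (g b c) x)"
    by (simp add: euler_g1 sum_distrib_left mult_ac)
  finally show ?thesis using radial_pd[OF a c] by (simp add: algebra_simps)
qed

lemma radial2_pd_bc:
  assumes a: "a \<in> T" and c: "c \<in> T"
  shows "(\<Sum>b\<in>T. \<Sum>d\<in>T. x b * x d * pd b (pd c (g a d)) x) = - (real k - 1) * g a c x"
proof -
  have "(\<Sum>b\<in>T. \<Sum>d\<in>T. x b * x d * pd b (pd c (g a d)) x)
      = (\<Sum>d\<in>T. x d * (\<Sum>b\<in>T. x b * pd b (pd c (g d a)) x))"
    by (subst sum.swap) (simp add: sum_distrib_left mult_ac sym a)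
  also have "\<dots> = (real k - 1) * (\<Sum>d\<in>T. x d * pd c (g d a) x)"
    by (simp add: euler_g1 sum_distrib_left mult_ac)
  finally show ?thesis using radial_pd[OF c a] sym[OF a c] by (simp add: algebra_simps)
qed

lemma radial2_pd_bd:
  "(\<Sum>b\<in>T. \<Sum>d\<in>T. x b * x d * pd b (pd d (g a c)) x) = (real k - 1) * real k * g a c x"
proof -
  have "(\<Sum>b\<in>T. \<Sum>d\<in>T. x b * x d * pd b (pd d (g a c)) x)
      = (\<Sum>d\<in>T. x d * (\<Sum>b\<in>T. x b * pd b (pd d (g a c)) x))"
    by (subst sum.swap) (simp add: sum_distrib_left mult_ac)
  also have "\<dots> = (real k - 1) * (\<Sum>d\<in>T. x d * pd d (g a c) x)"
    by (simp add: euler_g1 sum_distrib_left mult_ac)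
  finally show ?thesis using euler_g by simp
qed

lemma radial2_tcurv:
  assumes a: "a \<in> T" and c: "c \<in> T"
  shows "(\<Sum>b\<in>T. \<Sum>d\<in>T. x b * x d * tcurv n g a b c d x) = real k * (real k + 1) * g a c x"
proof -
  have "(\<Sum>b\<in>T. \<Sum>d\<in>T. x b * x d * tcurv n g a b c d x) =
      (\<Sum>b\<in>T. \<Sum>d\<in>T. x b * x d * pd a (pd c (g b d)) x) - (\<Sum>b\<in>T. \<Sum>d\<in>T. x b * x d * pd a (pd d (g b c)) x)
    - (\<Sum>b\<in>T. \<Sum>d\<in>T. x b * x d * pd b (pd c (g a d)) x) + (\<Sum>b\<in>T. \<Sum>d\<in>T. x b * x d * pd b (pd d (g a c)) x)"
    unfolding tcurv_def by (simp add: algebra_simps sum.distrib sum_subtractf)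
  then show ?thesis
    unfolding radial2_pd_ac[OF a c] radial2_pd_ad[OF a c] radial2_pd_bc[OF a c] radial2_pd_bd
    by (simp add: algebra_simps)
qed

lemma radial2_kulkarni:
  assumes a: "a \<in> T" and c: "c \<in> T"
  shows "(\<Sum>b\<in>T. \<Sum>d\<in>T. x b * x d * (tA n g b d x * kdelta a c - tA n g b c x * kdelta a d
           - tA n g a d x * kdelta b c + tA n g a c x * kdelta b d))
   = kdelta a c * (- tdivdiv n g x * rsq n x / (real n - 3))
     - x a * (((real n - 2) * real k * tdiv n g c x - tdivdiv n g x * x c) / (real n - 3))
     - x c * (((real n - 2) * real k * tdiv n g a x - tdivdiv n g x * x a) / (real n - 3))
     + rsq n x * tA n g a c x"
proof -
  have e1: "(\<Sum>b\<in>T. \<Sum>d\<in>T. x b * x d * (tA n g b d x * kdelta a c))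
      = kdelta a c * (\<Sum>b\<in>T. \<Sum>d\<in>T. x b * x d * tA n g b d x)"
    by (simp add: sum_distrib_left mult_ac)
  have e3: "(\<Sum>b\<in>T. \<Sum>d\<in>T. x b * x d * (tA n g a d x * kdelta b c))
      = (\<Sum>d\<in>T. \<Sum>b\<in>T. x d * x b * (tA n g d a x * kdelta c b))"
    by (subst sum.swap) (intro sum.cong refl, simp add: tA_sym a kdelta_def mult_ac)
  have "(\<Sum>b\<in>T. \<Sum>d\<in>T. x b * x d * (tA n g b d x * kdelta a c - tA n g b c x * kdelta a d
           - tA n g a d x * kdelta b c + tA n g a c x * kdelta b d))
      = (\<Sum>b\<in>T. \<Sum>d\<in>T. x b * x d * (tA n g b d x * kdelta a c))
      - (\<Sum>b\<in>T. \<Sum>d\<in>T. x b * x d * (tA n g b c x * kdelta a d))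
      - (\<Sum>b\<in>T. \<Sum>d\<in>T. x b * x d * (tA n g a d x * kdelta b c))
      + (\<Sum>b\<in>T. \<Sum>d\<in>T. x b * x d * (tA n g a c x * kdelta b d))"
    by (simp add: algebra_simps sum_subtractf sum.distrib)
  then show ?thesis
    unfolding e1 e3 sum2_kdelta[OF finite_tang a] sum2_kdelta[OF finite_tang c]
      sum2_kdelta_diag[OF finite_tang] radial2_tA radial_tA[OF a] radial_tA[OF c] rsq_def
    by (simp add: mult_ac)
qed

text \<open>The Weyl-type condition contracted with y_b y_d: an identity W_ac = 0 relating g_ac to the
  divergences D, S and to L.\<close>

definition weyl_radial :: "nat \<Rightarrow> nat \<Rightarrow> (nat \<Rightarrow> real) \<Rightarrow> real" where
  "weyl_radial a c x =
     real k * (real k + 1) * (real n - 2) * (real n - 3) * g a c x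
     - 2 * kdelta a c * (tdivdiv n g x * rsq n x) + 2 * (tdivdiv n g x * (x a * x c))
     - (real n - 2) * real k * (x a * tdiv n g c x) - (real n - 2) * real k * (x c * tdiv n g a x)
     + (real n - 2) * (rsq n x * tlin n g a c x)"

lemma weyl_radial_zero:
  assumes a: "a \<in> T" and c: "c \<in> T"
  shows "weyl_radial a c x = 0"
proof -
  let ?Q = "\<lambda>b d. tA n g b d x * kdelta a c - tA n g b c x * kdelta a d
                  - tA n g a d x * kdelta b c + tA n g a c x * kdelta b d"
  have "(\<Sum>b\<in>T. \<Sum>d\<in>T. x b * x d * (tcurv n g a b c d x + ?Q b d / (real n - 2))) = 0"
    by (intro sum.neutral ballI) (simp add: weyl_free a c)
  moreover have "(\<Sum>b\<in>T. \<Sum>d\<in>T. x b * x d * (tcurv n g a b c d x + ?Q b d / (real n - 2)))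
     = (\<Sum>b\<in>T. \<Sum>d\<in>T. x b * x d * tcurv n g a b c d x) + (\<Sum>b\<in>T. \<Sum>d\<in>T. x b * x d * ?Q b d) / (real n - 2)"
    by (simp add: sum.distrib sum_divide_distrib algebra_simps)
  ultimately have "real k * (real k + 1) * g a c x + (kdelta a c * (- tdivdiv n g x * rsq n x / (real n - 3))
     - x a * (((real n - 2) * real k * tdiv n g c x - tdivdiv n g x * x c) / (real n - 3))
     - x c * (((real n - 2) * real k * tdiv n g a x - tdivdiv n g x * x a) / (real n - 3))
     + rsq n x * tA n g a c x) / (real n - 2) = 0"
    using radial2_tcurv[OF a c] radial2_kulkarni[OF a c] by simp
  from weyl_contraction_algebra[OF _ _ this[unfolded tA_def]]
  show ?thesis unfolding weyl_radial_def using dim by (simp add: algebra_simps)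
qed

subsection \<open>Taking the divergence of the identity W_ac = 0\<close>

lemma pd3_commute: "pd c (pd a (pd b (g e f))) x = pd a (pd b (pd c (g e f))) x"
  using schwarz[OF polyfun_g1, of c a b e f x] schwarz_fun[OF polyfun_g, of c b e f] by simp

lemma div_tdiv: "(\<Sum>a\<in>T. pd a (tdiv n g a) x) = tdivdiv n g x"
proof -
  have "pd a (tdiv n g a) x = (\<Sum>b\<in>T. pd a (pd b (g b a)) x)" for a
    unfolding tdiv_def[abs_def] by (rule pd_sum) (auto intro: polyfun_g1)
  then show ?thesis unfolding tdivdiv_def by (auto intro!: sum.cong simp: sym)
qed

lemma div_tlin:
  assumes c: "c \<in> T"
  shows "(\<Sum>a\<in>T. pd a (tlin n g a c) x) = pd c (tdivdiv n g) x"
proof -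
  have pd_tlin: "pd a (tlin n g a c) x = (\<Sum>b\<in>T. pd a (pd a (pd b (g b c))) x)
      + (\<Sum>b\<in>T. pd a (pd b (pd c (g a b))) x) - (\<Sum>b\<in>T. pd a (pd b (pd b (g a c))) x)" for a
  proof -
    have "tlin n g a c = (\<lambda>x. (\<Sum>b\<in>T. pd a (pd b (g b c)) x) + (\<Sum>b\<in>T. pd b (pd c (g a b)) x)
                 - (\<Sum>b\<in>T. pd b (pd b (g a c)) x))" by (rule ext) (simp add: tlin_def)
    then show ?thesis
      by (simp add: pd_add[of n] pd_diff[of n] pd_sum[of _ n] monom_span_add monom_span_diff
                    monom_span_sum polyfun_g2 polyfun_g3)
  qed
  have "(\<Sum>a\<in>T. \<Sum>b\<in>T. pd a (pd b (pd b (g a c))) x) = (\<Sum>a\<in>T. \<Sum>b\<in>T. pd a (pd a (pd b (g b c))) x)"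
    by (subst sum.swap) (simp add: pd3_commute)
  moreover have "pd c (tdivdiv n g) x = (\<Sum>a\<in>T. \<Sum>b\<in>T. pd a (pd b (pd c (g a b))) x)"
    unfolding tdivdiv_def[abs_def] by (simp add: pd_sum[of _ n] monom_span_sum polyfun_g2 pd3_commute)
  ultimately show ?thesis unfolding pd_tlin by (simp add: sum.distrib sum_subtractf)
qed

lemma div_term_rsq:
  assumes c: "c \<in> T"
  shows "(\<Sum>a\<in>T. kdelta a c * pd a (\<lambda>x. tdivdiv n g x * rsq n x) x)
    = pd c (tdivdiv n g) x * rsq n x + tdivdiv n g x * (2 * x c)"
  unfolding kdelta_sum'[OF finite_tang c]
  by (simp add: pd_mult[OF polyfun_tdivdiv polyfun_rsq] pd_rsq[OF c])

lemma div_term_yy: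
  assumes c: "c \<in> T"
  shows "(\<Sum>a\<in>T. pd a (\<lambda>x. tdivdiv n g x * (x a * x c)) x)
    = (real k - 2) * tdivdiv n g x * x c + real n * tdivdiv n g x * x c"
proof -
  have "pd a (\<lambda>x. tdivdiv n g x * (x a * x c)) x
      = x c * (x a * pd a (tdivdiv n g) x) + tdivdiv n g x * x c + tdivdiv n g x * (kdelta a c * x a)"
    if a: "a \<in> T" for a
  proof -
    have "pd a (\<lambda>x. tdivdiv n g x * (x a * x c)) x
        = pd a (tdivdiv n g) x * (x a * x c) + tdivdiv n g x * pd a (\<lambda>x. x a * x c) x"
      by (rule pd_mult[OF polyfun_tdivdiv polyfun_mult[OF polyfun_coord_T[OF a] polyfun_coord_T[OF c]]])
    also have "pd a (\<lambda>x. x a * x c) x = kdelta a a * x c + x a * kdelta a c"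
      using pd_coord_mult[OF polyfun_coord_T[OF c] tang_range[OF a]] pd_coord by simp
    finally show ?thesis by (simp add: kdelta_def algebra_simps)
  qed
  then have "(\<Sum>a\<in>T. pd a (\<lambda>x. tdivdiv n g x * (x a * x c)) x)
      = x c * (\<Sum>a\<in>T. x a * pd a (tdivdiv n g) x) + (real n - 1) * (tdivdiv n g x * x c)
        + tdivdiv n g x * (\<Sum>a\<in>T. kdelta a c * x a)"
    by (simp add: sum.distrib sum_distrib_left card_T)
  also have "\<dots> = (real k - 2) * tdivdiv n g x * x c + real n * tdivdiv n g x * x c"
    by (simp only: euler_tdivdiv kdelta_sum'[OF finite_tang c]) (simp add: algebra_simps)
  finally show ?thesis .
qed

lemma div_term_y_tdiv:
  "(\<Sum>a\<in>T. pd a (\<lambda>x. x a * tdiv n g c x) x) = (real n - 1) * tdiv n g c x + (real k - 1) * tdiv n g c x"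
proof -
  have "(\<Sum>a\<in>T. pd a (\<lambda>x. x a * tdiv n g c x) x) = (\<Sum>a\<in>T. tdiv n g c x + x a * pd a (tdiv n g c) x)"
    by (intro sum.cong refl) (simp add: pd_coord_mult[OF polyfun_tdiv tang_range] kdelta_def)
  then show ?thesis by (simp add: sum.distrib card_T euler_tdiv)
qed

lemma div_term_tdiv_y:
  assumes c: "c \<in> T"
  shows "(\<Sum>a\<in>T. pd a (\<lambda>x. x c * tdiv n g a x) x) = tdiv n g c x + x c * tdivdiv n g x"
proof -
  have "(\<Sum>a\<in>T. pd a (\<lambda>x. x c * tdiv n g a x) x)
      = (\<Sum>a\<in>T. kdelta a c * tdiv n g a x + x c * pd a (tdiv n g a) x)"
    by (intro sum.cong refl) (simp add: pd_coord_mult[OF polyfun_tdiv tang_range[OF c]])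
  then show ?thesis by (simp add: sum.distrib kdelta_sum'[OF finite_tang c] sum_distrib_left[symmetric] div_tdiv)
qed

lemma div_term_rsq_tlin:
  assumes c: "c \<in> T"
  shows "(\<Sum>a\<in>T. pd a (\<lambda>x. rsq n x * tlin n g a c x) x)
    = 2 * real k * tdiv n g c x + rsq n x * pd c (tdivdiv n g) x"
proof -
  have "(\<Sum>a\<in>T. pd a (\<lambda>x. rsq n x * tlin n g a c x) x)
      = 2 * (\<Sum>a\<in>T. x a * tlin n g a c x) + rsq n x * (\<Sum>a\<in>T. pd a (tlin n g a c) x)"
    by (simp add: pd_mult[OF polyfun_rsq polyfun_tlin] pd_rsq eta_contract_eq
                  sum.distrib sum_distrib_left mult_ac)
  then show ?thesis using radial_tlin[OF c] div_tlin[OF c] by simp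
qed

lemma pd_weyl_radial:
  assumes a: "a \<in> T" and c: "c \<in> T"
  shows "pd a (weyl_radial a c) x =
     real k * (real k + 1) * (real n - 2) * (real n - 3) * pd a (g a c) x
     - 2 * kdelta a c * pd a (\<lambda>x. tdivdiv n g x * rsq n x) x + 2 * pd a (\<lambda>x. tdivdiv n g x * (x a * x c)) x
     - (real n - 2) * real k * pd a (\<lambda>x. x a * tdiv n g c x) x
     - (real n - 2) * real k * pd a (\<lambda>x. x c * tdiv n g a x) x
     + (real n - 2) * pd a (\<lambda>x. rsq n x * tlin n g a c x) x"
proof -
  note P = polyfun_g polyfun_tdivdiv polyfun_rsq polyfun_coord_T[OF a] polyfun_coord_T[OF c]
    polyfun_tdiv polyfun_tlin
  show ?thesis unfolding weyl_radial_def[abs_def]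
    by (simp add: pd_add[of n] pd_diff[of n] pd_cmult[of n] P polyfun_mult monom_span_cmult
                  monom_span_add monom_span_diff)
qed

text \<open>Since W_ac vanishes identically, so does \<Sum>_a \<partial>_a W_ac; this yields a formula for the
  divergence D_c in terms of the double divergence S.\<close>

lemma tdiv_formula:
  assumes c: "c \<in> T"
  shows "(real n - 2) * (real k)^2 * tdiv n g c x
    = (real k - 2) * tdivdiv n g x * x c - rsq n x * pd c (tdivdiv n g) x"
proof -
  define C1 where "C1 = real k * (real k + 1) * (real n - 2) * (real n - 3)"
  define C2 where "C2 = (real n - 2) * real k"
  have "pd a (weyl_radial a c) x = 0" if "a \<in> T" for a
    by (rule pd_vanish) (rule weyl_radial_zero[OF that c])
  then have "0 = (\<Sum>a\<in>T. pd a (weyl_radial a c) x)" by simp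
  also have "\<dots> = C1 * (\<Sum>a\<in>T. pd a (g a c) x)
      - 2 * (\<Sum>a\<in>T. kdelta a c * pd a (\<lambda>x. tdivdiv n g x * rsq n x) x)
      + 2 * (\<Sum>a\<in>T. pd a (\<lambda>x. tdivdiv n g x * (x a * x c)) x)
      - C2 * (\<Sum>a\<in>T. pd a (\<lambda>x. x a * tdiv n g c x) x)
      - C2 * (\<Sum>a\<in>T. pd a (\<lambda>x. x c * tdiv n g a x) x)
      + (real n - 2) * (\<Sum>a\<in>T. pd a (\<lambda>x. rsq n x * tlin n g a c x) x)"
    unfolding C1_def C2_def
    by (simp add: pd_weyl_radial c sum.distrib sum_subtractf sum_distrib_left mult.assoc)
  also have "\<dots> = C1 * (\<Sum>a\<in>T. pd a (g a c) x) - 2 * (pd c (tdivdiv n g) x * rsq n x + tdivdiv n g x * (2 * x c))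
      + 2 * ((real k - 2) * tdivdiv n g x * x c + real n * tdivdiv n g x * x c)
      - C2 * ((real n - 1) * tdiv n g c x + (real k - 1) * tdiv n g c x)
      - C2 * (tdiv n g c x + x c * tdivdiv n g x)
      + (real n - 2) * (2 * real k * tdiv n g c x + rsq n x * pd c (tdivdiv n g) x)"
    unfolding div_term_rsq[OF c] div_term_yy[OF c] div_term_y_tdiv div_term_tdiv_y[OF c]
      div_term_rsq_tlin[OF c] ..
  also have "\<dots> = (real n - 4) * ((real n - 2) * (real k)^2 * tdiv n g c x
      - ((real k - 2) * tdivdiv n g x * x c - rsq n x * pd c (tdivdiv n g) x))"
    unfolding C1_def C2_def tdiv_def[symmetric] by (simp add: algebra_simps power2_eq_square)
  finally show ?thesis using dim by simp
qed

lemma pd_tdiv_same: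
  assumes c: "c \<in> T"
  shows "(real n - 2) * (real k)^2 * pd c (tdiv n g c) x
    = (real k - 2) * (x c * pd c (tdivdiv n g) x + tdivdiv n g x)
      - (2 * (x c * pd c (tdivdiv n g) x) + rsq n x * pd c (pd c (tdivdiv n g)) x)"
proof -
  let ?S = "tdivdiv n g"
  note P = polyfun_tdivdiv polyfun_coord_T[OF c] polyfun_rsq polyfun_pd[OF polyfun_tdivdiv]
  have "(\<lambda>y. (real n - 2) * (real k)^2 * tdiv n g c y)
      = (\<lambda>y. (real k - 2) * (?S y * y c) - rsq n y * pd c ?S y)"
    using tdiv_formula[OF c] by (auto simp: mult.assoc)
  then have "(real n - 2) * (real k)^2 * pd c (tdiv n g c) x
      = pd c (\<lambda>y. (real k - 2) * (?S y * y c) - rsq n y * pd c ?S y) x"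
    using pd_cmult[OF polyfun_tdiv, of c "(real n - 2) * (real k)^2"] by metis
  also have "\<dots> = (real k - 2) * pd c (\<lambda>y. ?S y * y c) x - pd c (\<lambda>y. rsq n y * pd c ?S y) x"
    by (simp add: pd_diff[of n] pd_cmult[of n] P polyfun_mult monom_span_cmult)
  finally show ?thesis
    by (simp add: pd_mult[of n] P pd_coord pd_rsq[OF c] kdelta_def algebra_simps)
qed

text \<open>Summing over c: S satisfies an eigen-equation for the tangential Laplacian.\<close>

lemma tdivdiv_eigen:
  "(real n - 2) * (real k)^2 * tdivdiv n g x
    = (real k - 2) * (real k + real n - 5) * tdivdiv n g x - rsq n x * tlap n (tdivdiv n g) x"
proof -
  have "(real n - 2) * (real k)^2 * tdivdiv n g x = (\<Sum>c\<in>T. (real n - 2) * (real k)^2 * pd c (tdiv n g c) x)"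
    by (simp add: div_tdiv sum_distrib_left[symmetric])
  also have "\<dots> = (\<Sum>c\<in>T. (real k - 2) * (x c * pd c (tdivdiv n g) x + tdivdiv n g x)
      - (2 * (x c * pd c (tdivdiv n g) x) + rsq n x * pd c (pd c (tdivdiv n g)) x))"
    by (intro sum.cong refl pd_tdiv_same)
  also have "\<dots> = (real k - 2) * ((\<Sum>c\<in>T. x c * pd c (tdivdiv n g) x) + (real n - 1) * tdivdiv n g x)
      - (2 * (\<Sum>c\<in>T. x c * pd c (tdivdiv n g) x) + rsq n x * tlap n (tdivdiv n g) x)"
    by (simp add: tlap_def sum.distrib sum_subtractf sum_distrib_left card_T algebra_simps)
  also have "\<dots> = (real k - 2) * (real k + real n - 5) * tdivdiv n g x - rsq n x * tlap n (tdivdiv n g) x"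
    unfolding euler_tdivdiv by (simp add: algebra_simps)
  finally show ?thesis .
qed

lemma tdivdiv_zero: "tdivdiv n g x = 0"
proof (rule tlap_eigen_vanish[OF _ homog_tdivdiv indep_tdivdiv])
  let ?\<mu> = "(real k - 2) * (real k + real n - 5) - (real n - 2) * (real k)^2"
  have kk: "real k \<ge> 2" and nn: "real n \<ge> 5" using degree dim by auto
  have "(real k - 2) * (real k + real n - 5) \<le> real k * (real k + real n - 5)"
    using kk nn by (intro mult_right_mono) auto
  moreover have "real k + real n - 5 < (real n - 2) * real k"
    using mult_left_mono[OF kk, of "real n - 3"] nn by (simp add: algebra_simps)
  then have "real k * (real k + real n - 5) < (real n - 2) * (real k)^2"
    using kk by (simp add: power2_eq_square mult_ac)
  ultimately show "?\<mu> < 0 \<or> real (k - 2) * (real (k - 2) + real n - 3) < ?\<mu>" by simp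
  show "?\<mu> * tdivdiv n g y = rsq n y * tlap n (tdivdiv n g) y" for y
    using tdivdiv_eigen[of y] by (simp add: algebra_simps)
qed (use dim in simp)

lemma tdiv_zero:
  assumes c: "c \<in> T"
  shows "tdiv n g c x = 0"
proof -
  have "pd c (tdivdiv n g) x = 0" by (rule pd_vanish) (rule tdivdiv_zero)
  then have "(real n - 2) * (real k)^2 * tdiv n g c x = 0" using tdiv_formula[OF c, of x] tdivdiv_zero by simp
  then show ?thesis using dim degree by simp
qed

text \<open>With vanishing divergences, L reduces to minus the tangential Laplacian.\<close>

lemma tlin_tlap:
  assumes a: "a \<in> T" and c: "c \<in> T"
  shows "tlin n g a c x = - tlap n (g a c) x"
proof -
  have "(\<Sum>b\<in>T. pd a (pd b (g b c)) x) = pd a (tdiv n g c) x"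
    unfolding tdiv_def[abs_def] by (rule pd_sum[symmetric]) (auto intro: polyfun_g1)
  also have "\<dots> = 0" by (rule pd_vanish) (rule tdiv_zero[OF c])
  finally have p1: "(\<Sum>b\<in>T. pd a (pd b (g b c)) x) = 0" .
  have "(\<Sum>b\<in>T. pd b (pd c (g a b)) x) = (\<Sum>b\<in>T. pd c (pd b (g b a)) x)"
    by (intro sum.cong refl) (simp add: sym a schwarz[OF polyfun_g])
  also have "\<dots> = pd c (tdiv n g a) x"
    unfolding tdiv_def[abs_def] by (rule pd_sum[symmetric]) (auto intro: polyfun_g1)
  also have "\<dots> = 0" by (rule pd_vanish) (rule tdiv_zero[OF a])
  finally have p2: "(\<Sum>b\<in>T. pd b (pd c (g a b)) x) = 0" .
  show ?thesis unfolding tlin_def tlap_def using p1 p2 by simp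
qed

text \<open>Now W_ac = 0 says that g_ac satisfies an eigen-equation with too large an eigenvalue.\<close>

theorem g_zero:
  assumes a: "a \<in> T" and c: "c \<in> T"
  shows "g a c x = 0"
proof (rule tlap_eigen_vanish[OF _ homog_g indep_g])
  let ?\<mu> = "real k * (real k + 1) * (real n - 3)"
  show "?\<mu> * g a c y = rsq n y * tlap n (g a c) y" for y
  proof -
    have "(real n - 2) * (?\<mu> * g a c y - rsq n y * tlap n (g a c) y) = 0"
      using weyl_radial_zero[OF a c, of y] tdivdiv_zero[of y] tdiv_zero[OF a, of y] tdiv_zero[OF c, of y]
        tlin_tlap[OF a c, of y]
      unfolding weyl_radial_def by (simp add: algebra_simps)
    then show ?thesis using dim by simp
  qed
  have kk: "real k \<ge> 2" and nn: "real n \<ge> 5" using degree dim by auto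
  have "real k + real n - 3 < (real k + 1) * (real n - 3)"
    using mult_left_mono[of 1 "real n - 4" "real k"] kk nn by (simp add: algebra_simps)
  then have "real k * (real k + real n - 3) < real k * ((real k + 1) * (real n - 3))"
    using kk by (intro mult_strict_left_mono) auto
  then show "?\<mu> < 0 \<or> real k * (real k + real n - 3) < ?\<mu>" by (simp add: mult_ac)
qed (use dim in simp)

corollary tlin_zero:
  assumes a: "a \<in> T" and c: "c \<in> T"
  shows "tlin n g a c x = 0"
proof -
  have "pd b (g a c) = (\<lambda>x. 0)" for b using g_zero[OF a c] pd_vanish by blast
  then show ?thesis unfolding tlin_tlap[OF a c] tlap_def by (simp add: pd_const)
qed

end

section \<open>Reduction of the full problem to the tangential one\<close>

text \<open>Clearing denominators in the component Z_{anan} = 0, which expresses the boundary value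
  of A_ac through L_ac and the double divergence (used in Aten_restrict).\<close>

lemma Zten_normal_algebra:
  fixes N q S \<kappa> A L :: real
  assumes N: "N > 3"
    and h1: "0 = q + ((- 1 / (N - 1) * S) * \<kappa> + A) / (N - 2)"
    and h2: "A = L - q - 1 / (N - 1) * S * \<kappa>"
  shows "A = ((N - 2) * L - S * \<kappa>) / (N - 3)"
proof -
  have n1: "N - 1 \<noteq> 0" "N - 2 \<noteq> 0" "N - 3 \<noteq> 0" using N by auto
  define c where "c = S * \<kappa> / (N - 1)"
  have cc: "1 / (N - 1) * S * \<kappa> = c" "(- 1 / (N - 1) * S) * \<kappa> = - c" unfolding c_def by simp_all
  have q: "q = - ((A - c) / (N - 2))" using h1 unfolding cc by simp
  have "A = L + (A - c) / (N - 2) - c" using h2 unfolding cc q by simp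
  then have "A * (N - 2) = (L + (A - c) / (N - 2) - c) * (N - 2)" by simp
  also have "\<dots> = L * (N - 2) + (A - c) / (N - 2) * (N - 2) - c * (N - 2)" by (simp only: ring_distribs)
  also have "(A - c) / (N - 2) * (N - 2) = A - c" using n1(2) by simp
  finally have "A * (N - 3) = L * (N - 2) - c * (N - 1)" by (simp add: algebra_simps)
  also have "c * (N - 1) = S * \<kappa>" unfolding c_def using n1 by simp
  finally show ?thesis using n1 by (simp add: field_simps)
qed

lemma pd_tangential_vanish:
  assumes "\<And>y. y n = 0 \<Longrightarrow> f y = 0" "c \<noteq> n" "x n = 0"
  shows "pd c f x = 0"
proof -
  have "(\<lambda>t. f (x(c := t))) = (\<lambda>t. 0)" using assms by auto
  then show ?thesis unfolding pd_def by (simp add: DERIV_imp_deriv[OF DERIV_const])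
qed

text \<open>A homogeneous component of the tensor H: the hypotheses of the main theorem, with the
  algebraic conditions already extended from the half-space to all of R^n.\<close>

locale boundary_problem =
  fixes n k :: nat and G :: "nat \<Rightarrow> nat \<Rightarrow> (nat \<Rightarrow> real) \<Rightarrow> real"
  assumes dim: "n \<ge> 5" and degree: "k \<ge> 2"
    and homog_G: "\<And>i l. homog n k (G i l)"
    and sym: "\<And>i l. i \<in> {1..n} \<Longrightarrow> l \<in> {1..n} \<Longrightarrow> G i l = G l i"
    and trace_free: "\<And>x. (\<Sum>i\<in>{1..n}. G i i x) = 0"
    and normal_col: "\<And>i x. i \<in> {1..n} \<Longrightarrow> G i n x = 0"
    and radial: "\<And>i x. i \<in> {1..n} \<Longrightarrow> x n = 0 \<Longrightarrow> (\<Sum>l\<in>{1..n}. G i l x * x l) = 0"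
    and normal_deriv: "\<And>i l x. i \<in> {1..n} \<Longrightarrow> l \<in> {1..n} \<Longrightarrow> x n = 0 \<Longrightarrow> pd n (G i l) x = 0"
    and weyl_free: "\<And>i j a b x. i \<in> {1..n} \<Longrightarrow> j \<in> {1..n} \<Longrightarrow> a \<in> {1..n} \<Longrightarrow> b \<in> {1..n}
               \<Longrightarrow> x n = 0 \<Longrightarrow> Zten n G i j a b x = 0"
begin

definition bdry :: "nat \<Rightarrow> nat \<Rightarrow> (nat \<Rightarrow> real) \<Rightarrow> real" where
  "bdry a c x = G a c (x(n := 0))"

lemma n_range: "n \<in> {1..n}"
  using dim by simp

lemma n_pos: "n \<ge> 1"
  using dim by simp

lemma polyfun_G: "polyfun n (G i l)"
  by (rule homog_polyfun[OF homog_G])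

lemma normal_row: "i \<in> {1..n} \<Longrightarrow> G n i x = 0"
  using normal_col sym n_range by metis

lemma pd2_normal_col: "i \<in> {1..n} \<Longrightarrow> pd u (pd v (G i n)) x = 0"
  by (intro pd_vanish normal_col)

lemma pd2_normal_row: "i \<in> {1..n} \<Longrightarrow> pd u (pd v (G n i)) x = 0"
  by (intro pd_vanish normal_row)

lemma pd2_bdry:
  assumes "a \<noteq> n" "c \<noteq> n"
  shows "pd a (pd c (G b d)) (x(n := 0)) = pd a (pd c (bdry b d)) x"
proof -
  have "pd c (bdry b d) = (\<lambda>x. pd c (G b d) (x(n := 0)))"
    unfolding bdry_def[abs_def] using pd_restrict[OF assms(2)] by blast
  then show ?thesis using pd_restrict[OF assms(1)] by simp
qed

lemma pd_tang_normal:
  "c \<in> tang n \<Longrightarrow> a \<in> {1..n} \<Longrightarrow> b \<in> {1..n} \<Longrightarrow> y n = 0 \<Longrightarrow> pd c (pd n (G a b)) y = 0"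
  by (rule pd_tangential_vanish[of n]) (auto intro: normal_deriv simp: tang_normal)

lemma pd_normal_tang:
  "c \<in> tang n \<Longrightarrow> a \<in> {1..n} \<Longrightarrow> b \<in> {1..n} \<Longrightarrow> y n = 0 \<Longrightarrow> pd n (pd c (G a b)) y = 0"
  using pd_tang_normal schwarz[OF polyfun_G] by metis

lemma homog_bdry: "homog n k (bdry a c)"
  unfolding bdry_def[abs_def] by (rule homog_restrict[OF n_pos homog_G])

lemma indep_bdry: "normal_indep n (bdry a c)"
  unfolding bdry_def[abs_def] by (rule normal_indep_restrict)

lemma divdiv_restrict:
  "(\<Sum>m\<in>{1..n}. \<Sum>p\<in>{1..n}. pd m (pd p (G m p)) (x(n := 0))) = tdivdiv n bdry x"
  unfolding tdivdiv_def
  by (intro sum_split_normal_zero n_pos sum.neutral ballI pd2_normal_row)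
     (auto intro!: sum_split_normal_zero n_pos pd2_normal_col pd2_bdry tang_range tang_normal)

lemma Aten_tang_restrict:
  assumes a: "a \<in> tang n" and c: "c \<in> tang n"
  shows "Aten n G a c (x(n := 0))
    = tlin n bdry a c x - pd n (pd n (G a c)) (x(n := 0)) - 1 / (real n - 1) * tdivdiv n bdry x * kdelta a c"
proof -
  have "(\<Sum>m\<in>{1..n}. pd a (pd m (G m c)) (x(n := 0))) = (\<Sum>m\<in>tang n. pd a (pd m (bdry m c)) x)"
    using a c by (intro sum_split_normal_zero n_pos pd2_normal_row tang_range) (auto intro!: pd2_bdry dest: tang_normal)
  moreover have "(\<Sum>m\<in>{1..n}. pd m (pd c (G a m)) (x(n := 0))) = (\<Sum>m\<in>tang n. pd m (pd c (bdry a m)) x)"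
    using a c by (intro sum_split_normal_zero n_pos pd2_normal_col tang_range) (auto intro!: pd2_bdry dest: tang_normal)
  moreover have "(\<Sum>m\<in>{1..n}. pd m (pd m (G a c)) (x(n := 0)))
      = pd n (pd n (G a c)) (x(n := 0)) + (\<Sum>m\<in>tang n. pd m (pd m (bdry a c)) x)"
    unfolding sum_split_normal[OF n_pos] by (auto intro!: sum.cong pd2_bdry tang_normal)
  ultimately show ?thesis unfolding Aten_def divdiv_restrict tlin_def by simp
qed

lemma Aten_normal_restrict: "Aten n G n n (x(n := 0)) = - 1 / (real n - 1) * tdivdiv n bdry x"
proof -
  have "(\<Sum>m\<in>{1..n}. pd n (pd m (G m n)) (x(n := 0))) = 0" by (intro sum.neutral ballI pd2_normal_col)
  moreover have "(\<Sum>m\<in>{1..n}. pd m (pd n (G n m)) (x(n := 0))) = 0" by (intro sum.neutral ballI pd2_normal_row)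
  moreover have "(\<Sum>m\<in>{1..n}. pd m (pd m (G n n)) (x(n := 0))) = 0"
    by (intro sum.neutral ballI pd2_normal_row[OF n_range])
  ultimately show ?thesis unfolding Aten_def divdiv_restrict by (simp add: kdelta_def)
qed

lemma Zten_normal_restrict:
  assumes a: "a \<in> tang n" and c: "c \<in> tang n"
  shows "Zten n G a n c n (x(n := 0)) = pd n (pd n (G a c)) (x(n := 0))
     + (Aten n G n n (x(n := 0)) * kdelta a c + Aten n G a c (x(n := 0))) / (real n - 2)"
proof -
  have a1: "a \<in> {1..n}" and c1: "c \<in> {1..n}" using tang_range[OF a] tang_range[OF c] by auto
  have "a \<noteq> n" "c \<noteq> n" using a c by (auto simp: tang_normal)
  then show ?thesis unfolding Zten_def
    using pd2_normal_row[OF c1] pd2_normal_col[OF c1] pd_tang_normal[OF a a1 n_range] pd_normal_tang[OF c a1 n_range]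
    by (simp add: kdelta_def pd2_normal_row[OF n_range] algebra_simps add_divide_distrib)
qed

text \<open>The component Z_{anan} = 0 identifies the boundary value of A_ac with tA.\<close>

lemma Aten_restrict:
  assumes a: "a \<in> tang n" and c: "c \<in> tang n"
  shows "Aten n G a c (x(n := 0)) = tA n bdry a c x"
proof -
  have "Zten n G a n c n (x(n := 0)) = 0"
    by (rule weyl_free[OF tang_range[OF a] n_range tang_range[OF c] n_range]) simp
  then have h1: "0 = pd n (pd n (G a c)) (x(n := 0))
      + ((- 1 / (real n - 1) * tdivdiv n bdry x) * kdelta a c + Aten n G a c (x(n := 0))) / (real n - 2)"
    unfolding Zten_normal_restrict[OF a c] Aten_normal_restrict by simp
  have "real n > 3" using dim by simp
  from Zten_normal_algebra[OF this h1 Aten_tang_restrict[OF a c]] show ?thesis unfolding tA_def by simp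
qed

lemma weyl_free_bdry:
  assumes a: "a \<in> tang n" and b: "b \<in> tang n" and c: "c \<in> tang n" and d: "d \<in> tang n"
  shows "tcurv n bdry a b c d x + (tA n bdry b d x * kdelta a c - tA n bdry b c x * kdelta a d
           - tA n bdry a d x * kdelta b c + tA n bdry a c x * kdelta b d) / (real n - 2) = 0"
proof -
  have "Zten n G a b c d (x(n := 0)) = 0"
    by (rule weyl_free[OF tang_range[OF a] tang_range[OF b] tang_range[OF c] tang_range[OF d]]) simp
  then show ?thesis unfolding Zten_def tcurv_def
    using tang_normal[OF a] tang_normal[OF b] tang_normal[OF c] tang_normal[OF d]
    by (simp add: pd2_bdry Aten_restrict a b c d)
qed

lemma sym_bdry: "a \<in> tang n \<Longrightarrow> c \<in> tang n \<Longrightarrow> bdry a c = bdry c a"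
  unfolding bdry_def[abs_def] using sym tang_range by metis

lemma trace_free_bdry: "(\<Sum>a\<in>tang n. bdry a a x) = 0"
proof -
  have "(\<Sum>i\<in>{1..n}. G i i (x(n := 0))) = 0" by (rule trace_free)
  then show ?thesis using normal_row[OF n_range] unfolding sum_split_normal[OF n_pos] bdry_def by simp
qed

lemma radial_bdry:
  assumes a: "a \<in> tang n"
  shows "(\<Sum>b\<in>tang n. x b * bdry b a x) = 0"
proof -
  have "(\<Sum>l\<in>{1..n}. G a l (x(n := 0)) * (x(n := 0)) l) = 0" by (rule radial[OF tang_range[OF a]]) simp
  moreover have "G a l (x(n := 0)) * (x(n := 0)) l = x l * bdry l a x" if "l \<in> tang n" for l
    using sym[OF tang_range[OF a] tang_range[OF that]] tang_normal[OF that] unfolding bdry_def by simp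
  ultimately show ?thesis unfolding sum_split_normal[OF n_pos] by simp
qed

lemma tangential_problem_bdry: "tangential_problem n k bdry"
  by unfold_locales
     (auto simp: dim degree homog_bdry indep_bdry trace_free_bdry weyl_free_bdry intro: sym_bdry radial_bdry)

theorem boundary_vanishing:
  assumes "x n = 0" "a \<in> tang n" "c \<in> tang n"
  shows "G a c x = 0 \<and> Aten n G a c x = 0"
proof -
  interpret tangential_problem n k bdry by (rule tangential_problem_bdry)
  have x: "x(n := 0) = x" using assms(1) by auto
  have "G a c x = bdry a c x" unfolding bdry_def x ..
  moreover have "Aten n G a c x = tA n bdry a c x" using Aten_restrict[OF assms(2,3), of x] unfolding x .
  ultimately show ?thesis
    using g_zero[OF assms(2,3)] tlin_zero[OF assms(2,3)] tdivdiv_zero unfolding tA_def by simp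
qed

end

section \<open>Splitting H into homogeneous components\<close>

text \<open>If a finite family of functions, homogeneous of pairwise distinct degrees e k, sums to
  zero on a cone, then each member vanishes there: along a ray the sum is a polynomial in t
  vanishing for all t > 0.\<close>

lemma homogeneous_parts_vanish:
  fixes \<phi> :: "'a \<Rightarrow> (nat \<Rightarrow> real) \<Rightarrow> real"
  assumes K: "finite K" and inj: "inj_on e K" and k0: "k0 \<in> K" and Px: "P x"
    and cone: "\<And>y t. P y \<Longrightarrow> t > 0 \<Longrightarrow> P (\<lambda>j. t * y j)"
    and scale: "\<And>k y t. k \<in> K \<Longrightarrow> \<phi> k (\<lambda>j. t * y j) = t ^ e k * \<phi> k y"
    and zero: "\<And>y. P y \<Longrightarrow> (\<Sum>k\<in>K. \<phi> k y) = 0"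
  shows "\<phi> k0 x = 0"
proof -
  define p where "p = (\<Sum>k\<in>K. Polynomial.monom (\<phi> k x) (e k))"
  have roots: "poly p t = 0" if t: "t > 0" for t :: real
  proof -
    have "poly p t = (\<Sum>k\<in>K. \<phi> k (\<lambda>j. t * x j))"
      unfolding p_def by (simp add: poly_sum poly_monom scale mult.commute)
    also have "\<dots> = 0" by (rule zero[OF cone[OF Px t]])
    finally show ?thesis .
  qed
  have "p = 0"
  proof (rule ccontr)
    assume "p \<noteq> 0"
    then have "finite {t. poly p t = 0}" by (rule poly_roots_finite)
    moreover have "{0<..} \<subseteq> {t. poly p t = 0}" using roots by auto
    ultimately show False using infinite_Ioi[of "0::real"] finite_subset by blast
  qed
  have "coeff p (e k0) = (\<Sum>k\<in>K. if k = k0 then \<phi> k x else 0)"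
    unfolding p_def coeff_sum coeff_monom
    by (intro sum.cong refl) (use inj k0 in \<open>auto dest: inj_onD\<close>)
  also have "\<dots> = \<phi> k0 x" using K k0 by simp
  finally show ?thesis using \<open>p = 0\<close> by simp
qed

lemma finite_mindices: "finite (mindices n d)"
proof -
  have inj: "inj_on (\<lambda>\<alpha>. restrict \<alpha> {1..n}) (mindices n d)"
  proof (rule inj_onI, rule ext)
    fix \<alpha> \<beta> j assume "\<alpha> \<in> mindices n d" "\<beta> \<in> mindices n d" "restrict \<alpha> {1..n} = restrict \<beta> {1..n}"
    then show "\<alpha> j = \<beta> j" unfolding mindices_def by (cases "j \<in> {1..n}") (auto dest: fun_cong[of _ _ j])
  qed
  have "\<alpha> j \<le> d" if "\<alpha> \<in> mindices n d" "j \<in> {1..n}" for \<alpha> j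
    using member_le_sum[of j "{1..n}" \<alpha>] that unfolding mindices_def by auto
  then have "(\<lambda>\<alpha>. restrict \<alpha> {1..n}) ` mindices n d \<subseteq> PiE {1..n} (\<lambda>_. {0..d})" by auto
  moreover have "finite (PiE {1..n} (\<lambda>_. {0..d::nat}))" by (intro finite_PiE) auto
  ultimately show ?thesis using inj finite_subset finite_imageD by blast
qed

lemma homog_Aten:
  assumes "\<And>i l. homog n k (F i l)"
  shows "homog n (k - 2) (Aten n F i l)"
proof -
  have "Aten n F i l = (\<lambda>x. (\<Sum>m\<in>{1..n}. pd i (pd m (F m l)) x) + (\<Sum>m\<in>{1..n}. pd m (pd l (F i m)) x)
     - (\<Sum>m\<in>{1..n}. pd m (pd m (F i l)) x)
     - (1 / (real n - 1) * kdelta i l) * (\<Sum>m\<in>{1..n}. \<Sum>p\<in>{1..n}. pd m (pd p (F m p)) x))"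
    by (rule ext) (simp add: Aten_def mult_ac)
  then show ?thesis
    by (simp only:) (intro monom_span_add monom_span_diff monom_span_cmult monom_span_sum homog_pd2 assms; simp)
qed

lemma homog_Zten:
  assumes "\<And>i l. homog n k (F i l)"
  shows "homog n (k - 2) (Zten n F i j a b)"
proof -
  have "Zten n F i j a b = (\<lambda>x. pd i (pd a (F j b)) x - pd i (pd b (F j a)) x
     - pd j (pd a (F i b)) x + pd j (pd b (F i a)) x
     + (1 / (real n - 2)) * (kdelta i a * Aten n F j b x - kdelta i b * Aten n F j a x
        - kdelta j a * Aten n F i b x + kdelta j b * Aten n F i a x))"
    by (rule ext) (simp add: Zten_def mult_ac)
  then show ?thesis
    by (simp only:) (intro monom_span_add monom_span_diff monom_span_cmult homog_pd2 homog_Aten assms)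
qed

lemma pd2_add:
  assumes f: "polyfun n f" and g: "polyfun n g"
  shows "pd i (pd j (\<lambda>x. f x + g x)) x = pd i (pd j f) x + pd i (pd j g) x"
proof -
  have "pd j (\<lambda>x. f x + g x) = (\<lambda>x. pd j f x + pd j g x)" using pd_add[OF f g] by blast
  then show ?thesis using pd_add[OF polyfun_pd[OF f] polyfun_pd[OF g]] by simp
qed

lemma Aten_add:
  assumes "\<And>i l. polyfun n (F i l)" "\<And>i l. polyfun n (F' i l)"
  shows "Aten n (\<lambda>i l x. F i l x + F' i l x) i k x = Aten n F i k x + Aten n F' i k x"
  unfolding Aten_def by (simp add: pd2_add[of n] assms sum.distrib algebra_simps)

lemma Zten_add:
  assumes "\<And>i l. polyfun n (F i l)" "\<And>i l. polyfun n (F' i l)"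
  shows "Zten n (\<lambda>i l x. F i l x + F' i l x) i j a b x = Zten n F i j a b x + Zten n F' i j a b x"
  unfolding Zten_def by (simp add: pd2_add[of n] assms Aten_add[OF assms] algebra_simps)

lemma Aten_Zten_zero: "Aten n (\<lambda>i l x. 0) i k x = 0" "Zten n (\<lambda>i l x. 0) i j a b x = 0"
proof -
  have "pd a (\<lambda>x. 0) = (\<lambda>x. 0)" for a by (rule ext) (rule pd_const)
  then show "Aten n (\<lambda>i l x. 0) i k x = 0" "Zten n (\<lambda>i l x. 0) i j a b x = 0"
    unfolding Aten_def Zten_def by (simp_all add: pd_const)
qed

lemma Aten_Zten_sum:
  assumes "finite K" "\<And>q i l. polyfun n (F q i l)"
  shows "Aten n (\<lambda>i l x. \<Sum>q\<in>K. F q i l x) i k x = (\<Sum>q\<in>K. Aten n (F q) i k x)"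
    and "Zten n (\<lambda>i l x. \<Sum>q\<in>K. F q i l x) i j a b x = (\<Sum>q\<in>K. Zten n (F q) i j a b x)"
  using assms(1)
proof (induction K rule: finite_induct)
  case (insert q K)
  have P: "polyfun n (F q i l)" "polyfun n (\<lambda>x. \<Sum>q\<in>K. F q i l x)" for i l
    by (auto intro: assms(2) monom_span_sum insert)
  { case 1 show ?case using Aten_add[OF P] insert by simp }
  { case 2 show ?case using Zten_add[OF P] insert by simp }
qed (simp_all add: Aten_Zten_zero)

locale polynomial_problem =
  fixes n :: nat
    and h :: "nat \<Rightarrow> nat \<Rightarrow> (nat \<Rightarrow> nat) \<Rightarrow> real"
    and H :: "nat \<Rightarrow> nat \<Rightarrow> (nat \<Rightarrow> real) \<Rightarrow> real"
  assumes n6: "n \<ge> 6"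
    and H_poly: "\<And>i k x. H i k x =
                   (\<Sum>\<alpha>\<in>mindices n ((n - 2) div 2). h i k \<alpha> * monom n \<alpha> x)"
    and H_sym: "\<And>i k x. i \<in> {1..n} \<Longrightarrow> k \<in> {1..n} \<Longrightarrow> x n \<ge> 0 \<Longrightarrow> H i k x = H k i x"
    and H_tracefree: "\<And>x. x n \<ge> 0 \<Longrightarrow> (\<Sum>i\<in>{1..n}. H i i x) = 0"
    and H_in: "\<And>i x. i \<in> {1..n} \<Longrightarrow> x n \<ge> 0 \<Longrightarrow> H i n x = 0"
    and H_radial: "\<And>i x. i \<in> {1..n} \<Longrightarrow> x n = 0 \<Longrightarrow> (\<Sum>k\<in>{1..n}. H i k x * x k) = 0"
    and H_dn: "\<And>i k x. i \<in> {1..n} \<Longrightarrow> k \<in> {1..n} \<Longrightarrow> x n = 0 \<Longrightarrow> pd n (H i k) x = 0"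
    and Z0: "\<And>i j k l x. i \<in> {1..n} \<Longrightarrow> j \<in> {1..n} \<Longrightarrow> k \<in> {1..n} \<Longrightarrow> l \<in> {1..n}
               \<Longrightarrow> x n = 0 \<Longrightarrow> Zten n H i j k l x = 0"
begin

definition degs :: "nat set" where
  "degs = {2..(n - 2) div 2}"

definition hpart :: "nat \<Rightarrow> nat \<Rightarrow> nat \<Rightarrow> (nat \<Rightarrow> real) \<Rightarrow> real" where
  "hpart q i l x = (\<Sum>\<alpha>\<in>{\<alpha>\<in>mindices n ((n - 2) div 2). mdeg n \<alpha> = q}. h i l \<alpha> * monom n \<alpha> x)"

lemma finite_degs: "finite degs"
  by (simp add: degs_def)

lemma degs_ge: "q \<in> degs \<Longrightarrow> q \<ge> 2"
  by (simp add: degs_def)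

lemma homog_hpart: "homog n q (hpart q i l)"
  unfolding hpart_def[abs_def] by (rule monom_spanI) (auto intro: finite_subset[OF _ finite_mindices])

lemma polyfun_hpart: "polyfun n (hpart q i l)"
  by (rule homog_polyfun[OF homog_hpart])

lemma H_hpart: "H = (\<lambda>i l x. \<Sum>q\<in>degs. hpart q i l x)"
proof (intro ext)
  fix i l x
  have "mdeg n ` mindices n ((n - 2) div 2) \<subseteq> degs"
    unfolding degs_def mindices_def mdeg_def by auto
  then show "H i l x = (\<Sum>q\<in>degs. hpart q i l x)"
    unfolding H_poly hpart_def by (rule sum.group[OF finite_mindices finite_degs, symmetric])
qed

lemma hpart_half_space:
  assumes q: "q \<in> degs" and homog: "\<And>q. homog n q (\<psi> q)"
    and zero: "\<And>y. y n \<ge> 0 \<Longrightarrow> (\<Sum>q\<in>degs. \<psi> q y) = 0"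
  shows "\<psi> q x = 0"
proof (rule homog_half_space[OF homog])
  show "\<psi> q y = 0" if "y n \<ge> 0" for y
    by (rule homogeneous_parts_vanish[where K = degs and e = id and P = "\<lambda>y. y n \<ge> 0"])
       (use finite_degs q that zero homog_scale[OF homog] in auto)
qed

lemma hpart_boundary:
  fixes \<phi> :: "nat \<Rightarrow> (nat \<Rightarrow> real) \<Rightarrow> real"
  assumes "q \<in> degs" "x n = 0" "inj_on e degs"
    and "\<And>q y t. q \<in> degs \<Longrightarrow> \<phi> q (\<lambda>j. t * y j) = t ^ e q * \<phi> q y"
    and "\<And>y. y n = 0 \<Longrightarrow> (\<Sum>q\<in>degs. \<phi> q y) = 0"
  shows "\<phi> q x = 0"
  by (rule homogeneous_parts_vanish[where K = degs and e = e and P = "\<lambda>y. y n = 0"]) (use finite_degs assms in auto)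

lemma inj_degs_minus:
  assumes "s \<le> 2"
  shows "inj_on (\<lambda>q. q - s) degs"
proof (rule inj_onI)
  fix p q assume "p \<in> degs" "q \<in> degs" "p - s = q - s"
  then show "p = q" using degs_ge[of p] degs_ge[of q] assms by simp
qed

lemma hpart_sym: "q \<in> degs \<Longrightarrow> i \<in> {1..n} \<Longrightarrow> l \<in> {1..n} \<Longrightarrow> hpart q i l = hpart q l i"
  using hpart_half_space[of q "\<lambda>q y. hpart q i l y - hpart q l i y"] H_sym
  unfolding H_hpart by (auto simp: monom_span_diff homog_hpart sum_subtractf)

lemma hpart_trace_free: "q \<in> degs \<Longrightarrow> (\<Sum>i\<in>{1..n}. hpart q i i x) = 0"
  using hpart_half_space[of q "\<lambda>q y. \<Sum>i\<in>{1..n}. hpart q i i y"] H_tracefree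
  unfolding H_hpart by (simp add: monom_span_sum homog_hpart sum.swap[of _ degs])

lemma hpart_normal_col: "q \<in> degs \<Longrightarrow> i \<in> {1..n} \<Longrightarrow> hpart q i n x = 0"
  using hpart_half_space[of q "\<lambda>q. hpart q i n"] H_in unfolding H_hpart by (simp add: homog_hpart)

lemma hpart_radial:
  assumes q: "q \<in> degs" and i: "i \<in> {1..n}" and x: "x n = 0"
  shows "(\<Sum>l\<in>{1..n}. hpart q i l x * x l) = 0"
proof (rule hpart_boundary[where \<phi> = "\<lambda>q y. \<Sum>l\<in>{1..n}. hpart q i l y * y l" and x = x, OF q x])
  show "inj_on (\<lambda>q. q + 1) degs" by (simp add: inj_on_def)
  show "(\<Sum>l\<in>{1..n}. hpart p i l (\<lambda>j. t * y j) * (t * y l)) = t ^ (p + 1) * (\<Sum>l\<in>{1..n}. hpart p i l y * y l)"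
    for p y t by (simp add: homog_scale[OF homog_hpart] sum_distrib_left mult_ac)
  show "(\<Sum>p\<in>degs. \<Sum>l\<in>{1..n}. hpart p i l y * y l) = 0" if "y n = 0" for y
    using H_radial[where x = y, OF i that] unfolding H_hpart by (simp add: sum_distrib_right sum.swap[of _ degs])
qed

lemma hpart_normal_deriv:
  assumes q: "q \<in> degs" and il: "i \<in> {1..n}" "l \<in> {1..n}" and x: "x n = 0"
  shows "pd n (hpart q i l) x = 0"
proof (rule hpart_boundary[where \<phi> = "\<lambda>q. pd n (hpart q i l)" and x = x, OF q x inj_degs_minus[of 1]])
  show "pd n (hpart p i l) (\<lambda>j. t * y j) = t ^ (p - 1) * pd n (hpart p i l) y" for p y t
    by (rule homog_scale[OF homog_pd[OF homog_hpart]])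
  show "(\<Sum>p\<in>degs. pd n (hpart p i l) y) = 0" if "y n = 0" for y
    using H_dn[where x = y, OF il that] unfolding H_hpart pd_sum[OF finite_degs polyfun_hpart] .
qed simp

lemma hpart_weyl_free:
  assumes q: "q \<in> degs" and ijab: "i \<in> {1..n}" "j \<in> {1..n}" "a \<in> {1..n}" "b \<in> {1..n}" and x: "x n = 0"
  shows "Zten n (hpart q) i j a b x = 0"
proof (rule hpart_boundary[where \<phi> = "\<lambda>q. Zten n (hpart q) i j a b" and x = x, OF q x inj_degs_minus[of 2]])
  show "Zten n (hpart p) i j a b (\<lambda>j. t * y j) = t ^ (p - 2) * Zten n (hpart p) i j a b y" for p y t
    by (rule homog_scale[OF homog_Zten[OF homog_hpart]])
  show "(\<Sum>p\<in>degs. Zten n (hpart p) i j a b y) = 0" if "y n = 0" for y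
    using Z0[where x = y, OF ijab that] unfolding H_hpart Aten_Zten_sum(2)[OF finite_degs polyfun_hpart] .
qed simp

lemma boundary_problem_hpart: "q \<in> degs \<Longrightarrow> boundary_problem n q (hpart q)"
  using n6 degs_ge homog_hpart hpart_sym hpart_trace_free hpart_normal_col hpart_radial
    hpart_normal_deriv hpart_weyl_free
  by unfold_locales auto

theorem tangential_vanishing:
  assumes "x n = 0" "i \<in> tang n" "k \<in> tang n"
  shows "H i k x = 0 \<and> Aten n H i k x = 0"
proof -
  have "hpart q i k x = 0 \<and> Aten n (hpart q) i k x = 0" if "q \<in> degs" for q
    using boundary_problem.boundary_vanishing[where x = x, OF boundary_problem_hpart[OF that] assms] .
  then show ?thesis unfolding H_hpart Aten_Zten_sum(1)[OF finite_degs polyfun_hpart] by simp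
qed

end

theorem lemma2p2:
  fixes n :: nat
    and h :: "nat \<Rightarrow> nat \<Rightarrow> (nat \<Rightarrow> nat) \<Rightarrow> real"
    and H :: "nat \<Rightarrow> nat \<Rightarrow> (nat \<Rightarrow> real) \<Rightarrow> real"
  assumes n6: "n \<ge> 6"
    and H_poly: "\<And>i k x. H i k x =
                   (\<Sum>\<alpha>\<in>mindices n ((n - 2) div 2). h i k \<alpha> * monom n \<alpha> x)"
    and H_sym: "\<And>i k x. i \<in> {1..n} \<Longrightarrow> k \<in> {1..n} \<Longrightarrow> x n \<ge> 0 \<Longrightarrow> H i k x = H k i x"
    and H_tracefree: "\<And>x. x n \<ge> 0 \<Longrightarrow> (\<Sum>i\<in>{1..n}. H i i x) = 0"
    and H_in: "\<And>i x. i \<in> {1..n} \<Longrightarrow> x n \<ge> 0 \<Longrightarrow> H i n x = 0"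
    and H_radial: "\<And>i x. i \<in> {1..n} \<Longrightarrow> x n = 0 \<Longrightarrow> (\<Sum>k\<in>{1..n}. H i k x * x k) = 0"
    and H_dn: "\<And>i k x. i \<in> {1..n} \<Longrightarrow> k \<in> {1..n} \<Longrightarrow> x n = 0 \<Longrightarrow> pd n (H i k) x = 0"
    and Z0: "\<And>i j k l x. i \<in> {1..n} \<Longrightarrow> j \<in> {1..n} \<Longrightarrow> k \<in> {1..n} \<Longrightarrow> l \<in> {1..n}
               \<Longrightarrow> x n = 0 \<Longrightarrow> Zten n H i j k l x = 0"
  shows "\<forall>x i k. x n = 0 \<longrightarrow> i \<in> {1..n-1} \<longrightarrow> k \<in> {1..n-1} \<longrightarrow>
           H i k x = 0 \<and> Aten n H i k x = 0"
proof -
  interpret polynomial_problem n h H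
    by (rule polynomial_problem.intro) (fact assms)+
  show ?thesis using tangential_vanishing by (simp add: tang_def)
qed

end
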